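(* For every integer $n_0\ge1$ and every $\epsilon>0$ there is $N=N(\epsilon,n_0)$ (depending only on $\epsilon,n_0$ and the constants $\beta,m_0$) such that for every $(\mu,\nu)\in\boldsymbol{\mathcal P}$, $$\mathbb E\big(|Z_n(x,y)-Z_\infty(x,y)|\big)\le\epsilon$$ whenever $n\ge N$ and $(x,y)\in\mathbb S$ with $x+y\ge1/n_0$.
   Context: Fix $0<m_0\le\beta<\infty$. $\boldsymbol{\mathcal P}$: pairs $(\mu,\nu)$ of probability measures on $[0,\beta]$ with $\int k\,\mu(dk)=\int k\,\nu(dk)\ge m_0$. $\mathbb S=[0,\infty)^2\setminus\{(0,0)\}$. RRU with reinforcement distributions $(\mu,\nu)$ and initial composition $(x,y)$: with $\{U_n\}$ i.i.d. uniform$[0,1]$ independent of i.i.d. $\{(V_n,W_n)\}$ with uniform$[0,1]$ marginals, $R_X(n)=q_\mu(V_n)$, $R_Y(n)=q_\nu(W_n)$ (quantile functions), $X_0=x,Y_0=y$, $X_{n+1}=X_n+R_X(n+1)\mathbb I(n+1)$, $Y_{n+1}=Y_n+R_Y(n+1)(1-\mathbb I(n+1))$, $\mathbb I(n+1)=\mathbf 1\{U_{n+1}\le X_n/(X_n+Y_n)\}$; $Z_n(x,y)=X_n/(X_n+Y_n)$, which converges a.s. to $Z_\infty(x,y)$. *)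

theory Defs
  imports "HOL-Probability.Probability"
begin

definition quantile :: "real measure \<Rightarrow> real \<Rightarrow> real" where
  "quantile \<mu> v = Inf {t::real. v \<le> measure \<mu> {..t}}"

definition in_P :: "real \<Rightarrow> real \<Rightarrow> real measure \<Rightarrow> real measure \<Rightarrow> bool" where
  "in_P \<beta> m0 \<mu> \<nu> \<longleftrightarrow>
     prob_space \<mu> \<and> sets \<mu> = sets borel \<and> measure \<mu> {0..\<beta>} = 1 \<and>
     prob_space \<nu> \<and> sets \<nu> = sets borel \<and> measure \<nu> {0..\<beta>} = 1 \<and>
     (\<integral>k. k \<partial>\<mu>) = (\<integral>k. k \<partial>\<nu>) \<and> (\<integral>k. k \<partial>\<mu>) \<ge> m0"

text \<open>Urn composition (X_n, Y_n) of the randomly reinforced urn, driven by the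
  sample sequences u, v, w (values of U_n, V_n, W_n) and the reinforcement
  functions qX = q_mu, qY = q_nu.\<close>
fun rru :: "(real \<Rightarrow> real) \<Rightarrow> (real \<Rightarrow> real) \<Rightarrow> real \<Rightarrow> real \<Rightarrow>
    (nat \<Rightarrow> real) \<Rightarrow> (nat \<Rightarrow> real) \<Rightarrow> (nat \<Rightarrow> real) \<Rightarrow> nat \<Rightarrow> real \<times> real" where
  "rru qX qY x y u v w 0 = (x, y)"
| "rru qX qY x y u v w (Suc n) =
     (let (X, Y) = rru qX qY x y u v w n in
      if u (Suc n) \<le> X / (X + Y)
      then (X + qX (v (Suc n)), Y)
      else (X, Y + qY (w (Suc n))))"

definition rru_Z :: "real measure \<Rightarrow> real measure \<Rightarrow> real \<Rightarrow> real \<Rightarrow>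
    (nat \<Rightarrow> 'a \<Rightarrow> real) \<Rightarrow> (nat \<Rightarrow> 'a \<Rightarrow> real) \<Rightarrow> (nat \<Rightarrow> 'a \<Rightarrow> real) \<Rightarrow> nat \<Rightarrow> 'a \<Rightarrow> real" where
  "rru_Z \<mu> \<nu> x y U V W n \<omega> =
     (let (X, Y) = rru (quantile \<mu>) (quantile \<nu>) x y (\<lambda>i. U i \<omega>) (\<lambda>i. V i \<omega>) (\<lambda>i. W i \<omega>) n
      in X / (X + Y))"

text \<open>Standing hypotheses on the driving randomness: U_n i.i.d. uniform[0,1],
  (V_n, W_n) i.i.d. with uniform[0,1] marginals (arbitrary coupling), and the
  family {U_n} independent of the family {(V_n, W_n)}.\<close>
definition driving_noise :: "'a measure \<Rightarrow> (nat \<Rightarrow> 'a \<Rightarrow> real) \<Rightarrow> (nat \<Rightarrow> 'a \<Rightarrow> real) \<Rightarrow> (nat \<Rightarrow> 'a \<Rightarrow> real) \<Rightarrow> bool" where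
  "driving_noise M U V W \<longleftrightarrow>
     prob_space M \<and>
     (\<forall>n. U n \<in> borel_measurable M \<and> V n \<in> borel_measurable M \<and> W n \<in> borel_measurable M) \<and>
     (\<forall>n. distr M borel (U n) = uniform_measure lborel {0..1}) \<and>
     (\<forall>n. distr M borel (V n) = uniform_measure lborel {0..1}) \<and>
     (\<forall>n. distr M borel (W n) = uniform_measure lborel {0..1}) \<and>
     (\<forall>n. distr M borel (\<lambda>\<omega>. (V n \<omega>, W n \<omega>)) = distr M borel (\<lambda>\<omega>. (V 0 \<omega>, W 0 \<omega>))) \<and>
     prob_space.indep_vars M (\<lambda>_. borel)
        (\<lambda>i. case i of Inl n \<Rightarrow> (\<lambda>\<omega>. (U n \<omega>, 0::real)) | Inr n \<Rightarrow> (\<lambda>\<omega>. (V n \<omega>, W n \<omega>)))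
        (UNIV :: (nat + nat) set)"

end

theory Submission
  imports Defs
begin

text \<open>
  Write \<open>T\<^sub>n = X\<^sub>n + Y\<^sub>n\<close> for the total mass. Every draw adds a reinforcement of mean at
  least \<open>m0\<close> and size at most \<open>\<beta>\<close>, so \<open>E exp (- T\<^sub>n / \<beta>)\<close> decays geometrically; splitting at
  \<open>T\<^sub>n = \<beta> c n\<close> then bounds \<open>E (1 / T\<^sub>n\<^sup>2)\<close> by a summable sequence \<open>c\<^sub>n\<close> depending only on
  \<open>\<beta>, m0, n0\<close>. Because both colours have the same mean reinforcement, the conditional drift
  of \<open>Z\<^sub>n\<close> is \<open>O(\<beta>\<^sup>2 / T\<^sub>n\<^sup>2)\<close>, while the martingale part has orthogonal increments of second
  moment \<open>O(\<beta>\<^sup>2 / T\<^sub>n\<^sup>2)\<close>. Hence \<open>E |Z\<^sub>m - Z\<^sub>n| \<le> \<beta>\<^sup>2 t\<^sub>n + 2 \<beta> sqrt t\<^sub>n\<close> with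
  \<open>t\<^sub>n = \<Sum>\<^sub>k\<^sub>\<ge>\<^sub>n c\<^sub>k\<close>, uniformly in \<open>(\<mu>, \<nu>)\<close>; dominated convergence lets \<open>m \<rightarrow> \<infinity>\<close>.
\<close>

lemma measurable_fst_borel[measurable]:
  "(fst :: 'a::second_countable_topology \<times> 'b::second_countable_topology \<Rightarrow> 'a) \<in> borel_measurable borel"
  using measurable_fst[of "borel::'a measure" "borel::'b measure"] by (simp add: borel_prod)

lemma measurable_snd_borel[measurable]:
  "(snd :: 'a::second_countable_topology \<times> 'b::second_countable_topology \<Rightarrow> 'b) \<in> borel_measurable borel"
  using measurable_snd[of "borel::'a measure" "borel::'b measure"] by (simp add: borel_prod)

lemma measurable_case_prod_apply:
  fixes \<psi> :: "'b::second_countable_topology \<Rightarrow> 'c::second_countable_topology \<Rightarrow> real"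
  assumes "case_prod \<psi> \<in> borel_measurable borel" "f \<in> borel_measurable N" "g \<in> borel_measurable N"
  shows "(\<lambda>p. \<psi> (f p) (g p) :: real) \<in> borel_measurable N"
  using measurable_compose[OF borel_measurable_Pair[OF assms(2,3)] assms(1)] by simp

abbreviation uniform_unit :: "real measure" where
  "uniform_unit \<equiv> uniform_measure lborel {0..1}"

lemma prob_space_uniform_unit: "prob_space uniform_unit"
  by (intro prob_space_uniform_measure) auto

context prob_space
begin

lemma integrable_bounded: "f \<in> borel_measurable M \<Longrightarrow> (\<And>x. \<bar>f x :: real\<bar> \<le> C) \<Longrightarrow> integrable M f"
  by (rule integrable_const_bound[where B=C]) auto

lemma abs_integral_le_const:
  fixes f :: "'a \<Rightarrow> real"
  assumes "f \<in> borel_measurable M" "\<And>x. \<bar>f x\<bar> \<le> C"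
  shows "\<bar>\<integral>x. f x \<partial>M\<bar> \<le> C"
proof -
  have "\<bar>\<integral>x. f x \<partial>M\<bar> \<le> (\<integral>x. \<bar>f x\<bar> \<partial>M)"
    using integral_norm_bound[where f=f] by simp
  also have "\<dots> \<le> C"
    using assms by (intro integral_le_const integrable_bounded) auto
  finally show ?thesis .
qed

lemma integral_abs_le_sqrt_integral_square:
  fixes f :: "'a \<Rightarrow> real"
  assumes "integrable M f" "integrable M (\<lambda>x. (f x)\<^sup>2)"
  shows "(\<integral>x. \<bar>f x\<bar> \<partial>M) \<le> sqrt (\<integral>x. (f x)\<^sup>2 \<partial>M)"
proof -
  have "0 \<le> (\<integral>x. \<bar>f x\<bar>\<^sup>2 \<partial>M) - (\<integral>x. \<bar>f x\<bar> \<partial>M)\<^sup>2"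
    using variance_positive[of "\<lambda>x. \<bar>f x\<bar>"] variance_eq[of "\<lambda>x. \<bar>f x\<bar>"] assms by simp
  then show ?thesis by (simp add: real_le_rsqrt)
qed

end

lemma exp_neg_le_one_minus_half: "0 \<le> (a::real) \<Longrightarrow> a \<le> 1 \<Longrightarrow> exp (- a) \<le> 1 - a / 2"
proof -
  assume a: "0 \<le> a" "a \<le> 1"
  have "a ^ 3 \<le> a"
    using a mult_right_mono[of "a * a" 1 a] mult_le_one[of a a] by (simp add: power3_eq_cube)
  moreover have "(1 - a / 2) * (1 + a + a\<^sup>2 / 2) = 1 + a / 2 - a ^ 3 / 4"
    by (simp add: algebra_simps power2_eq_square power3_eq_cube divide_simps)
  ultimately have "1 \<le> (1 - a / 2) * (1 + a + a\<^sup>2 / 2)" using a by simp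
  also have "\<dots> \<le> (1 - a / 2) * exp a"
    using a exp_lower_Taylor_quadratic[of a] by (intro mult_left_mono) auto
  finally show ?thesis by (simp add: exp_minus field_simps)
qed

section \<open>The quantile transform\<close>

text \<open>Agrees with \<open>quantile \<mu>\<close> on the open unit interval, which carries the uniform law;
  outside it the values make the function monotone, hence Borel on all of \<open>\<real>\<close>.\<close>

definition clamped_quantile :: "real \<Rightarrow> real measure \<Rightarrow> real \<Rightarrow> real" where
  "clamped_quantile \<beta> \<mu> v = (if v \<le> 0 then 0 else if v < 1 then quantile \<mu> v else \<beta>)"

lemma distr_uniform_unit_eq_restrict:
  assumes [measurable]: "f \<in> borel_measurable borel"
  shows "distr (uniform_unit) borel f
       = distr (restrict_space lborel {0<..<1}) borel f"
proof (rule measure_eqI)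
  fix B :: "'a set" assume "B \<in> sets (distr (uniform_unit) borel f)"
  then have [measurable]: "B \<in> sets borel" by simp
  have "AE v in lborel. v \<in> f -` B \<inter> {0..1} \<longleftrightarrow> v \<in> f -` B \<inter> {0<..<1::real}"
    using AE_lborel_singleton[of 0] AE_lborel_singleton[of 1] by eventually_elim auto
  then have "emeasure lborel (f -` B \<inter> {0..1}) = emeasure lborel (f -` B \<inter> {0<..<1})"
    by (rule emeasure_eq_AE) auto
  moreover have "emeasure (distr (uniform_unit) borel f) B
      = emeasure lborel (f -` B \<inter> {0..1})"
  proof (subst emeasure_distr)
    have "f -` B \<in> sets lborel" using measurable_sets[of f borel borel B] by simp
    then show "emeasure (uniform_unit) (f -` B \<inter> space (uniform_unit))
        = emeasure lborel (f -` B \<inter> {0..1})"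
      by (simp add: emeasure_uniform_measure divide_ennreal_def Int_commute)
  qed simp_all
  moreover have "emeasure (distr (restrict_space lborel {0<..<1}) borel f) B
      = emeasure lborel (f -` B \<inter> {0<..<1})"
    by (subst emeasure_distr)
       (simp_all add: measurable_restrict_space1 emeasure_restrict_space space_restrict_space)
  ultimately show "emeasure (distr (uniform_unit) borel f) B
           = emeasure (distr (restrict_space lborel {0<..<1}) borel f) B"
    by simp
qed simp

locale real_distribution_on = real_distribution M for M :: "real measure" +
  fixes \<beta> :: real
  assumes prob_support: "prob {0..\<beta>} = 1"
begin

sublocale cdf_distribution ..

lemma cdf_eq_0: "t < 0 \<Longrightarrow> cdf M t = 0"
proof -
  assume "t < 0"
  then have "cdf M t \<le> prob (UNIV - {0..\<beta>})"
    unfolding cdf_def by (intro finite_measure_mono) auto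
  also have "\<dots> = 0" using prob_compl[of "{0..\<beta>}"] prob_support by simp
  finally show ?thesis using cdf_nonneg[of t] by linarith
qed

lemma cdf_eq_1: "cdf M \<beta> = 1"
proof -
  have "prob {0..\<beta>} \<le> cdf M \<beta>"
    unfolding cdf_def by (intro finite_measure_mono) auto
  then show ?thesis using prob_support cdf_bounded_prob[of \<beta>] by simp
qed

lemma quantile_le_iff: "0 < v \<Longrightarrow> v < 1 \<Longrightarrow> quantile M v \<le> t \<longleftrightarrow> v \<le> cdf M t"
  using pseudoinverse[of v t] by (simp add: quantile_def cdf_def)

lemma clamped_quantile_bounds: "0 \<le> clamped_quantile \<beta> M v \<and> clamped_quantile \<beta> M v \<le> \<beta>"
proof -
  have "0 \<le> quantile M v \<and> quantile M v \<le> \<beta>" if "0 < v" "v < 1" for v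
    using that quantile_le_iff[of v "quantile M v"] quantile_le_iff[of v \<beta>]
      cdf_eq_0[of "quantile M v"] cdf_eq_1 by force
  moreover from this[of "1/2"] have "0 \<le> \<beta>" by simp
  ultimately show ?thesis using cdf_eq_1 cdf_eq_0[of 0] cdf_nonneg
    by (auto simp: clamped_quantile_def)
qed

lemma mono_clamped_quantile: "mono (clamped_quantile \<beta> M)"
proof (rule monoI)
  fix a b :: real assume "a \<le> b"
  moreover have "quantile M a \<le> quantile M b" if "0 < a" "b < 1"
    using that \<open>a \<le> b\<close> quantile_le_iff[of a] quantile_le_iff[of b] by force
  ultimately show "clamped_quantile \<beta> M a \<le> clamped_quantile \<beta> M b"
    using clamped_quantile_bounds[of a] clamped_quantile_bounds[of b]
    by (auto simp: clamped_quantile_def)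
qed

lemma measurable_clamped_quantile[measurable]: "clamped_quantile \<beta> M \<in> borel_measurable borel"
  by (rule borel_measurable_mono[OF mono_clamped_quantile])

lemma distr_uniform_clamped_quantile:
  "distr (uniform_unit) borel (clamped_quantile \<beta> M) = M"
proof -
  have "distr (uniform_unit) borel (clamped_quantile \<beta> M)
      = distr (restrict_space lborel {0<..<1}) borel (clamped_quantile \<beta> M)"
    by (rule distr_uniform_unit_eq_restrict) measurable
  also have "\<dots> = distr (restrict_space lborel {0<..<1}) borel (\<lambda>v. Inf {t. v \<le> cdf M t})"
    by (rule distr_cong) (auto simp: space_restrict_space clamped_quantile_def quantile_def cdf_def)
  also have "\<dots> = M" by (rule distr_I_eq_M)
  finally show ?thesis .
qed

lemma integral_clamped_quantile: "(\<integral>v. clamped_quantile \<beta> M v \<partial>uniform_unit) = (\<integral>k. k \<partial>M)"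
proof -
  have "(\<integral>k. k \<partial>M) = (\<integral>k. k \<partial>distr uniform_unit borel (clamped_quantile \<beta> M))"
    by (simp add: distr_uniform_clamped_quantile)
  also have "\<dots> = (\<integral>v. clamped_quantile \<beta> M v \<partial>uniform_unit)"
    by (subst integral_distr) auto
  finally show ?thesis ..
qed

end

section \<open>The driving noise\<close>

definition noise_family ::
    "(nat \<Rightarrow> 'a \<Rightarrow> real) \<Rightarrow> (nat \<Rightarrow> 'a \<Rightarrow> real) \<Rightarrow> (nat \<Rightarrow> 'a \<Rightarrow> real) \<Rightarrow> nat + nat \<Rightarrow> 'a \<Rightarrow> real \<times> real" where
  "noise_family U V W i = (case i of Inl n \<Rightarrow> (\<lambda>\<omega>. (U n \<omega>, 0)) | Inr n \<Rightarrow> (\<lambda>\<omega>. (V n \<omega>, W n \<omega>)))"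

definition history_index :: "nat \<Rightarrow> (nat + nat) set" where
  "history_index m = Inl ` {..m} \<union> Inr ` {..m}"

definition draw_index :: "nat \<Rightarrow> (nat + nat) set" where
  "draw_index m = {Inl (Suc m), Inr (Suc m)}"

abbreviation history_space :: "nat \<Rightarrow> (nat + nat \<Rightarrow> real \<times> real) measure" where
  "history_space m \<equiv> PiM (history_index m) (\<lambda>_. borel)"

abbreviation draw_space :: "nat \<Rightarrow> (nat + nat \<Rightarrow> real \<times> real) measure" where
  "draw_space m \<equiv> PiM (draw_index m) (\<lambda>_. borel)"

lemma measurable_history_coordinates[measurable]:
  assumes "i \<le> m"
  shows "(\<lambda>h. fst (h (Inl i))) \<in> borel_measurable (history_space m)"
    and "(\<lambda>h. fst (h (Inr i))) \<in> borel_measurable (history_space m)"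
    and "(\<lambda>h. snd (h (Inr i))) \<in> borel_measurable (history_space m)"
  using assms by (simp_all add: history_index_def)

lemma measurable_draw_coordinates[measurable]:
  "(\<lambda>d. fst (d (Inl (Suc m)))) \<in> borel_measurable (draw_space m)"
  "(\<lambda>d. fst (d (Inr (Suc m)))) \<in> borel_measurable (draw_space m)"
  "(\<lambda>d. snd (d (Inr (Suc m)))) \<in> borel_measurable (draw_space m)"
  by (simp_all add: draw_index_def)

locale driving_noise_space = prob_space M for M :: "'a measure" +
  fixes U V W :: "nat \<Rightarrow> 'a \<Rightarrow> real"
  assumes driving_noise: "driving_noise M U V W"
begin

lemma measurable_noise[measurable]:
  "U n \<in> borel_measurable M" "V n \<in> borel_measurable M" "W n \<in> borel_measurable M"
  using driving_noise by (auto simp: driving_noise_def)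

lemma distr_noise:
  "distr M borel (U n) = uniform_unit"
  "distr M borel (V n) = uniform_unit"
  "distr M borel (W n) = uniform_unit"
  using driving_noise by (auto simp: driving_noise_def)

lemma indep_noise_family: "indep_vars (\<lambda>_. borel) (noise_family U V W) UNIV"
  using driving_noise unfolding driving_noise_def noise_family_def[abs_def] by simp

lemma integral_noise:
  fixes f :: "real \<Rightarrow> real"
  assumes "f \<in> borel_measurable borel"
  shows "(\<integral>\<omega>. f (V n \<omega>) \<partial>M) = (\<integral>v. f v \<partial>uniform_unit)"
    and "(\<integral>\<omega>. f (W n \<omega>) \<partial>M) = (\<integral>v. f v \<partial>uniform_unit)"
  using integral_distr[of "V n" M borel f, symmetric] integral_distr[of "W n" M borel f, symmetric]
    assms by (simp_all add: distr_noise)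

lemma AE_noise_in_open_unit: "AE \<omega> in M. \<forall>n. V n \<omega> \<in> {0<..<1} \<and> W n \<omega> \<in> {0<..<1}"
proof -
  have unit: "AE v in uniform_unit. v \<in> {0<..<1}"
    by (intro AE_uniform_measureI)
       (auto intro!: eventually_mono[OF eventually_conj[OF AE_lborel_singleton[of 0]
         AE_lborel_singleton[of 1]]])
  have "AE \<omega> in M. V n \<omega> \<in> {0<..<1}" for n
    using unit unfolding distr_noise(2)[of n, symmetric] by (subst (asm) AE_distr_iff) auto
  moreover have "AE \<omega> in M. W n \<omega> \<in> {0<..<1}" for n
    using unit unfolding distr_noise(3)[of n, symmetric] by (subst (asm) AE_distr_iff) auto
  ultimately show ?thesis by (simp add: AE_all_countable)
qed

lemma prob_U_le: "0 \<le> z \<Longrightarrow> z \<le> 1 \<Longrightarrow> prob {\<omega> \<in> space M. U n \<omega> \<le> z} = z"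
proof -
  assume z: "0 \<le> z" "z \<le> 1"
  have "prob {\<omega> \<in> space M. U n \<omega> \<le> z} = measure (distr M borel (U n)) {..z}"
    by (subst measure_distr) (auto simp: vimage_def Int_def conj_commute)
  also have "\<dots> = measure lborel ({0..1} \<inter> {..z})" by (simp add: distr_noise)
  also have "{0..1} \<inter> {..z} = {0..z}" using z by auto
  finally show ?thesis using z by simp
qed

lemma indep_noise_restrict:
  "A \<inter> B = {} \<Longrightarrow> indep_var (PiM A (\<lambda>_. borel)) (\<lambda>\<omega>. restrict (\<lambda>i. noise_family U V W i \<omega>) A)
                              (PiM B (\<lambda>_. borel)) (\<lambda>\<omega>. restrict (\<lambda>i. noise_family U V W i \<omega>) B)"
  using indep_var_restrict[OF indep_noise_family] by simp

lemma indep_U_V: "indep_var borel (U n) borel (V n)"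
  and indep_U_W: "indep_var borel (U n) borel (W n)"
proof -
  let ?R = "\<lambda>A \<omega>. restrict (\<lambda>i. noise_family U V W i \<omega>) A"
  have indep: "indep_var (PiM {Inl n} (\<lambda>_. borel)) (?R {Inl n}) (PiM {Inr n} (\<lambda>_. borel)) (?R {Inr n})"
    by (rule indep_noise_restrict) simp
  have U: "(\<lambda>h. fst (h (Inl n))) \<circ> ?R {Inl n} = U n"
    and V: "(\<lambda>h. fst (h (Inr n))) \<circ> ?R {Inr n} = V n"
    and W: "(\<lambda>h. snd (h (Inr n))) \<circ> ?R {Inr n} = W n"
    by (auto simp: noise_family_def)
  have mU: "(\<lambda>h. fst (h (Inl n))) \<in> borel_measurable (PiM {Inl n} (\<lambda>_. borel :: (real \<times> real) measure))"
    and mV: "(\<lambda>h. fst (h (Inr n))) \<in> borel_measurable (PiM {Inr n} (\<lambda>_. borel :: (real \<times> real) measure))"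
    and mW: "(\<lambda>h. snd (h (Inr n))) \<in> borel_measurable (PiM {Inr n} (\<lambda>_. borel :: (real \<times> real) measure))"
    by simp_all
  show "indep_var borel (U n) borel (V n)" using indep_var_compose[OF indep mU mV] by (simp only: U V)
  show "indep_var borel (U n) borel (W n)" using indep_var_compose[OF indep mU mW] by (simp only: U W)
qed

definition history :: "nat \<Rightarrow> 'a \<Rightarrow> nat + nat \<Rightarrow> real \<times> real" where
  "history m \<omega> = restrict (\<lambda>i. noise_family U V W i \<omega>) (history_index m)"

definition draw :: "nat \<Rightarrow> 'a \<Rightarrow> nat + nat \<Rightarrow> real \<times> real" where
  "draw m \<omega> = restrict (\<lambda>i. noise_family U V W i \<omega>) (draw_index m)"

lemma indep_history_draw: "indep_var (history_space m) (history m) (draw_space m) (draw m)"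
  unfolding history_def draw_def by (rule indep_noise_restrict) (auto simp: history_index_def draw_index_def)

lemma measurable_history[measurable]: "history m \<in> measurable M (history_space m)"
  using indep_var_rv1[OF indep_history_draw] .

lemma measurable_draw[measurable]: "draw m \<in> measurable M (draw_space m)"
  using indep_var_rv2[OF indep_history_draw] .

lemma history_coordinates:
  "i \<le> m \<Longrightarrow> fst (history m \<omega> (Inl i)) = U i \<omega> \<and> fst (history m \<omega> (Inr i)) = V i \<omega>
     \<and> snd (history m \<omega> (Inr i)) = W i \<omega>"
  by (simp add: history_def history_index_def noise_family_def)

lemma draw_coordinates:
  "fst (draw m \<omega> (Inl (Suc m))) = U (Suc m) \<omega>" "fst (draw m \<omega> (Inr (Suc m))) = V (Suc m) \<omega>"
  "snd (draw m \<omega> (Inr (Suc m))) = W (Suc m) \<omega>"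
  by (simp_all add: draw_def draw_index_def noise_family_def)

lemma integral_history_draw:
  fixes f :: "(nat + nat \<Rightarrow> real \<times> real) \<Rightarrow> (nat + nat \<Rightarrow> real \<times> real) \<Rightarrow> real"
  assumes f[measurable]: "case_prod f \<in> borel_measurable (history_space m \<Otimes>\<^sub>M draw_space m)"
    and bounded: "\<And>h d. \<bar>f h d\<bar> \<le> C"
  shows "(\<integral>\<omega>. f (history m \<omega>) (draw m \<omega>) \<partial>M)
       = (\<integral>\<omega>. (\<integral>\<omega>'. f (history m \<omega>) (draw m \<omega>') \<partial>M) \<partial>M)"
proof -
  let ?H = "distr M (history_space m) (history m)" and ?D = "distr M (draw_space m) (draw m)"
  interpret H: prob_space ?H by (rule prob_space_distr) simp
  interpret D: prob_space ?D by (rule prob_space_distr) simp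
  interpret HD: pair_prob_space ?H ?D ..
  have joint: "?H \<Otimes>\<^sub>M ?D = distr M (history_space m \<Otimes>\<^sub>M draw_space m) (\<lambda>\<omega>. (history m \<omega>, draw m \<omega>))"
    using indep_history_draw[of m] unfolding indep_var_distribution_eq by simp
  have integrable: "integrable (?H \<Otimes>\<^sub>M ?D) (case_prod f)"
    by (rule HD.integrable_const_bound[where B=C]) (auto simp: bounded)
  have inner: "(\<integral>d. f h d \<partial>?D) = (\<integral>\<omega>'. f h (draw m \<omega>') \<partial>M)"
    if "h \<in> space (history_space m)" for h
    using measurable_Pair2[OF f that] by (subst integral_distr) auto
  have "(\<integral>\<omega>. f (history m \<omega>) (draw m \<omega>) \<partial>M) = integral\<^sup>L (?H \<Otimes>\<^sub>M ?D) (case_prod f)"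
    unfolding joint by (subst integral_distr) auto
  also have "\<dots> = (\<integral>h. (\<integral>d. f h d \<partial>?D) \<partial>?H)"
    using HD.integral_fst[OF integrable] by simp
  also have "\<dots> = (\<integral>h. (\<integral>\<omega>'. f h (draw m \<omega>') \<partial>M) \<partial>?H)"
    by (rule Bochner_Integration.integral_cong) (simp_all add: inner)
  also have "\<dots> = (\<integral>\<omega>. (\<integral>\<omega>'. f (history m \<omega>) (draw m \<omega>') \<partial>M) \<partial>M)"
  proof (rule integral_distr)
    show "(\<lambda>h. \<integral>\<omega>'. f h (draw m \<omega>') \<partial>M) \<in> borel_measurable (history_space m)"
    proof (rule measurable_cong[THEN iffD1, rotated])
      show "(\<lambda>h. \<integral>d. f h d \<partial>?D) \<in> borel_measurable (history_space m)"
        by (rule D.borel_measurable_lebesgue_integral) simp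
    qed (simp add: inner)
  qed simp
  finally show ?thesis .
qed

lemma integral_draw_choice:
  fixes f g :: "real \<Rightarrow> real"
  assumes z: "0 \<le> z" "z \<le> 1"
    and f[measurable]: "f \<in> borel_measurable borel" and g[measurable]: "g \<in> borel_measurable borel"
    and bounded: "\<And>v. \<bar>f v\<bar> \<le> C" "\<And>v. \<bar>g v\<bar> \<le> C"
  shows "(\<integral>\<omega>. (if U j \<omega> \<le> z then f (V j \<omega>) else g (W j \<omega>)) \<partial>M)
     = z * (\<integral>v. f v \<partial>uniform_unit) + (1 - z) * (\<integral>v. g v \<partial>uniform_unit)"
proof -
  let ?I = "\<lambda>\<omega>. indicator {..z} (U j \<omega>) :: real"
  have I: "(indicator {..z} :: real \<Rightarrow> real) \<in> borel_measurable borel" by simp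
  have indep_f: "indep_var borel ?I borel (\<lambda>\<omega>. f (V j \<omega>))"
    and indep_g: "indep_var borel ?I borel (\<lambda>\<omega>. g (W j \<omega>))"
    using indep_var_compose[OF indep_U_V I f] indep_var_compose[OF indep_U_W I g]
    by (simp_all add: comp_def)
  have int: "integrable M ?I" "integrable M (\<lambda>\<omega>. f (V j \<omega>))" "integrable M (\<lambda>\<omega>. g (W j \<omega>))"
    using bounded by (auto intro: integrable_bounded[where C=1] integrable_bounded[where C=C])
  have "(\<integral>\<omega>. ?I \<omega> \<partial>M) = (\<integral>\<omega>. indicator {\<omega> \<in> space M. U j \<omega> \<le> z} \<omega> \<partial>M)"
    by (intro Bochner_Integration.integral_cong) (auto simp: indicator_def)
  then have EI: "(\<integral>\<omega>. ?I \<omega> \<partial>M) = z" using prob_U_le[OF z] by simp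
  have "(\<lambda>\<omega>. if U j \<omega> \<le> z then f (V j \<omega>) else g (W j \<omega>))
      = (\<lambda>\<omega>. ?I \<omega> * f (V j \<omega>) + (g (W j \<omega>) - ?I \<omega> * g (W j \<omega>)))"
    by (auto simp: indicator_def)
  then have "(\<integral>\<omega>. (if U j \<omega> \<le> z then f (V j \<omega>) else g (W j \<omega>)) \<partial>M)
      = (\<integral>\<omega>. ?I \<omega> * f (V j \<omega>) \<partial>M) + ((\<integral>\<omega>. g (W j \<omega>) \<partial>M) - (\<integral>\<omega>. ?I \<omega> * g (W j \<omega>) \<partial>M))"
    using indep_var_integrable[OF indep_f int(1,2)] indep_var_integrable[OF indep_g int(1,3)] int(3)
    by simp
  also have "\<dots> = z * (\<integral>\<omega>. f (V j \<omega>) \<partial>M) + (1 - z) * (\<integral>\<omega>. g (W j \<omega>) \<partial>M)"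
    using indep_var_lebesgue_integral[OF indep_f int(1,2)] indep_var_lebesgue_integral[OF indep_g int(1,3)] EI
    by (simp add: algebra_simps)
  finally show ?thesis by (simp add: integral_noise)
qed

end

section \<open>The urn process\<close>

definition urn_fraction :: "real \<times> real \<Rightarrow> real" where
  "urn_fraction s = fst s / (fst s + snd s)"

definition urn_step ::
    "(real \<Rightarrow> real) \<Rightarrow> (real \<Rightarrow> real) \<Rightarrow> real \<times> real \<Rightarrow> real \<Rightarrow> real \<Rightarrow> real \<Rightarrow> real \<times> real" where
  "urn_step qX qY s u v w =
     (if u \<le> urn_fraction s then (fst s + qX v, snd s) else (fst s, snd s + qY w))"

lemma measurable_urn_fraction[measurable]: "urn_fraction \<in> borel_measurable borel"
  unfolding urn_fraction_def[abs_def] by measurable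

lemma measurable_urn_step[measurable]:
  assumes [measurable]: "qX \<in> borel_measurable borel" "qY \<in> borel_measurable borel"
    "s \<in> borel_measurable N" "u \<in> borel_measurable N" "v \<in> borel_measurable N" "w \<in> borel_measurable N"
  shows "(\<lambda>p. urn_step qX qY (s p) (u p) (v p) (w p)) \<in> borel_measurable N"
  unfolding urn_step_def by measurable

lemma rru_Suc_urn_step:
  "rru qX qY x y u v w (Suc n) = urn_step qX qY (rru qX qY x y u v w n) (u (Suc n)) (v (Suc n)) (w (Suc n))"
  by (simp add: urn_step_def urn_fraction_def split: prod.split)

lemma rru_cong:
  assumes "\<And>i. 1 \<le> i \<Longrightarrow> i \<le> n \<Longrightarrow> u i = u' i \<and> qX (v i) = qX' (v' i) \<and> qY (w i) = qY' (w' i)"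
  shows "rru qX qY x y u v w n = rru qX' qY' x y u' v' w' n"
  using assms by (induction n) (simp_all add: rru_Suc_urn_step urn_step_def del: rru.simps(2))

lemma rru_nonneg_mass_ge:
  assumes "\<And>v. 0 \<le> qX v" "\<And>w. 0 \<le> qY w" "0 \<le> x" "0 \<le> y"
  shows "0 \<le> fst (rru qX qY x y u v w n) \<and> 0 \<le> snd (rru qX qY x y u v w n)
    \<and> x + y \<le> fst (rru qX qY x y u v w n) + snd (rru qX qY x y u v w n)"
proof (induction n)
  case (Suc n)
  then show ?case using assms(1)[of "v (Suc n)"] assms(2)[of "w (Suc n)"]
    by (auto simp: rru_Suc_urn_step urn_step_def simp del: rru.simps(2))
qed (use assms in simp)

locale urn_process = driving_noise_space M U V W for M :: "'a measure" and U V W +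
  fixes qX qY :: "real \<Rightarrow> real" and x y :: real
  assumes measurable_qX[measurable]: "qX \<in> borel_measurable borel"
    and measurable_qY[measurable]: "qY \<in> borel_measurable borel"
    and qX_nonneg: "\<And>v. 0 \<le> qX v" and qY_nonneg: "\<And>w. 0 \<le> qY w"
    and x_nonneg: "0 \<le> x" and y_nonneg: "0 \<le> y" and initial_mass_pos: "0 < x + y"
begin

definition urn :: "nat \<Rightarrow> 'a \<Rightarrow> real \<times> real" where
  "urn n \<omega> = rru qX qY x y (\<lambda>i. U i \<omega>) (\<lambda>i. V i \<omega>) (\<lambda>i. W i \<omega>) n"

definition urn_of_history :: "nat \<Rightarrow> (nat + nat \<Rightarrow> real \<times> real) \<Rightarrow> real \<times> real" where
  "urn_of_history n h = rru qX qY x y (\<lambda>i. fst (h (Inl i))) (\<lambda>i. fst (h (Inr i))) (\<lambda>i. snd (h (Inr i))) n"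

definition states :: "(real \<times> real) set" where
  "states = {s. 0 \<le> fst s \<and> 0 \<le> snd s \<and> x + y \<le> fst s + snd s}"

lemma urn_in_states: "urn n \<omega> \<in> states"
  and urn_of_history_in_states: "urn_of_history n h \<in> states"
  unfolding urn_def urn_of_history_def states_def
  using rru_nonneg_mass_ge[of qX qY, OF qX_nonneg qY_nonneg x_nonneg y_nonneg] by blast+

lemma states_mass_pos: "s \<in> states \<Longrightarrow> 0 < fst s + snd s"
  using initial_mass_pos by (auto simp: states_def)

lemma states_fraction_bounds: "s \<in> states \<Longrightarrow> 0 \<le> urn_fraction s \<and> urn_fraction s \<le> 1"
  using initial_mass_pos by (auto simp: states_def urn_fraction_def divide_simps)

lemma urn_Suc: "urn (Suc m) \<omega> = urn_step qX qY (urn m \<omega>) (U (Suc m) \<omega>) (V (Suc m) \<omega>) (W (Suc m) \<omega>)"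
  unfolding urn_def by (simp add: rru_Suc_urn_step del: rru.simps(2))

lemma urn_eq_urn_of_history: "n \<le> m \<Longrightarrow> urn n \<omega> = urn_of_history n (history m \<omega>)"
  unfolding urn_def urn_of_history_def by (rule rru_cong) (simp add: history_coordinates)

lemma measurable_urn_of_history[measurable]: "n \<le> m \<Longrightarrow> urn_of_history n \<in> borel_measurable (history_space m)"
proof (induction n)
  case (Suc n)
  then have [measurable]: "urn_of_history n \<in> borel_measurable (history_space m)" by simp
  have "urn_of_history (Suc n) = (\<lambda>h. urn_step qX qY (urn_of_history n h)
      (fst (h (Inl (Suc n)))) (fst (h (Inr (Suc n)))) (snd (h (Inr (Suc n)))))"
    by (rule ext) (simp add: urn_of_history_def rru_Suc_urn_step del: rru.simps(2))
  then show ?case using Suc.prems by simp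
qed (simp add: urn_of_history_def[abs_def])

lemma measurable_urn[measurable]: "urn n \<in> borel_measurable M"
proof -
  have "(\<lambda>\<omega>. urn_of_history n (history n \<omega>)) \<in> borel_measurable M"
    using measurable_compose[OF measurable_history measurable_urn_of_history[of n n]] by simp
  then show ?thesis by (simp add: urn_eq_urn_of_history[of n n, symmetric])
qed

lemma urn_fraction_increments:
  assumes s: "s \<in> states" and r: "0 \<le> r"
  shows "urn_fraction (fst s + r, snd s) - urn_fraction s
      = (1 - urn_fraction s) * (r / (fst s + snd s + r))"
    and "urn_fraction (fst s, snd s + r) - urn_fraction s
      = - (urn_fraction s * (r / (fst s + snd s + r)))"
  using states_mass_pos[OF s] r by (simp_all add: urn_fraction_def field_simps)

lemma abs_urn_fraction_increments_le:
  assumes s: "s \<in> states" and r: "0 \<le> r"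
  shows "\<bar>urn_fraction (fst s + r, snd s) - urn_fraction s\<bar> \<le> r / (fst s + snd s + r)"
    and "\<bar>urn_fraction (fst s, snd s + r) - urn_fraction s\<bar> \<le> r / (fst s + snd s + r)"
proof -
  define q where "q = r / (fst s + snd s + r)"
  have "0 \<le> q" using states_mass_pos[OF s] r by (simp add: q_def)
  then show "\<bar>urn_fraction (fst s + r, snd s) - urn_fraction s\<bar> \<le> r / (fst s + snd s + r)"
    "\<bar>urn_fraction (fst s, snd s + r) - urn_fraction s\<bar> \<le> r / (fst s + snd s + r)"
    using states_fraction_bounds[OF s]
    unfolding urn_fraction_increments[OF s r] q_def[symmetric] abs_minus_cancel abs_mult
    by (simp_all add: mult_left_le_one_le)
qed

text \<open>The conditional expectation of \<open>\<psi> (urn m) (urn (Suc m))\<close> given the past, as a function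
  of \<open>urn m = s\<close>.\<close>

definition transition_mean :: "(real \<times> real \<Rightarrow> real \<times> real \<Rightarrow> real) \<Rightarrow> real \<times> real \<Rightarrow> real" where
  "transition_mean \<psi> s = urn_fraction s * (\<integral>v. \<psi> s (fst s + qX v, snd s) \<partial>uniform_unit)
     + (1 - urn_fraction s) * (\<integral>w. \<psi> s (fst s, snd s + qY w) \<partial>uniform_unit)"

lemma measurable_transition_sections:
  fixes \<psi> :: "real \<times> real \<Rightarrow> real \<times> real \<Rightarrow> real"
  assumes "case_prod \<psi> \<in> borel_measurable borel"
  shows "(\<lambda>v. \<psi> s (fst s + qX v, snd s)) \<in> borel_measurable borel"
    and "(\<lambda>w. \<psi> s (fst s, snd s + qY w)) \<in> borel_measurable borel"
  by (rule measurable_case_prod_apply[OF assms]; measurable)+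

lemma measurable_transition_mean[measurable]:
  assumes \<psi>: "case_prod \<psi> \<in> borel_measurable borel"
  shows "transition_mean \<psi> \<in> borel_measurable borel"
proof -
  interpret uniform: prob_space uniform_unit by (rule prob_space_uniform_unit)
  have sets: "sets (borel \<Otimes>\<^sub>M uniform_unit) = sets (borel :: ((real \<times> real) \<times> real) measure)"
    by (simp add: borel_prod[symmetric] cong: sets_pair_measure_cong)
  have "(\<lambda>(s, v). \<psi> s (fst s + qX v, snd s)) \<in> borel_measurable (borel \<Otimes>\<^sub>M uniform_unit)"
    "(\<lambda>(s, w). \<psi> s (fst s, snd s + qY w)) \<in> borel_measurable (borel \<Otimes>\<^sub>M uniform_unit)"
    unfolding measurable_cong_sets[OF sets refl] split_beta'
    by (rule measurable_case_prod_apply[OF \<psi>]; measurable)+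
  from this[THEN uniform.borel_measurable_lebesgue_integral] show ?thesis
    unfolding transition_mean_def[abs_def] by (simp add: split_beta')
qed

lemma transition_mean_bounded:
  fixes \<psi> :: "real \<times> real \<Rightarrow> real \<times> real \<Rightarrow> real"
  assumes \<psi>: "case_prod \<psi> \<in> borel_measurable borel" and bounded: "\<And>s t. \<bar>\<psi> s t\<bar> \<le> C"
    and s: "s \<in> states"
  shows "\<bar>transition_mean \<psi> s\<bar> \<le> C"
proof -
  interpret uniform: prob_space uniform_unit by (rule prob_space_uniform_unit)
  define z where "z = urn_fraction s"
  define A where "A = (\<integral>v. \<psi> s (fst s + qX v, snd s) \<partial>uniform_unit)"
  define B where "B = (\<integral>w. \<psi> s (fst s, snd s + qY w) \<partial>uniform_unit)"
  have z: "0 \<le> z" "z \<le> 1" using states_fraction_bounds[OF s] by (auto simp: z_def)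
  have "\<bar>A\<bar> \<le> C" "\<bar>B\<bar> \<le> C"
    unfolding A_def B_def
    by (rule uniform.abs_integral_le_const; use measurable_transition_sections[OF \<psi>] bounded in simp)+
  then have "\<bar>z * A + (1 - z) * B\<bar> \<le> z * C + (1 - z) * C"
    using z by (intro order_trans[OF abs_triangle_ineq] add_mono) (auto simp: abs_mult intro: mult_left_mono)
  then show ?thesis by (simp add: transition_mean_def z_def A_def B_def algebra_simps)
qed

lemma integral_history_transition:
  fixes \<Phi> :: "(nat + nat \<Rightarrow> real \<times> real) \<Rightarrow> real"
  assumes \<Phi>[measurable]: "\<Phi> \<in> borel_measurable (history_space m)" and \<Phi>_bounded: "\<And>h. \<bar>\<Phi> h\<bar> \<le> C"
    and \<psi>[measurable]: "case_prod \<psi> \<in> borel_measurable borel" and \<psi>_bounded: "\<And>s t. \<bar>\<psi> s t\<bar> \<le> D"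
  shows "(\<integral>\<omega>. \<Phi> (history m \<omega>) * \<psi> (urn m \<omega>) (urn (Suc m) \<omega>) \<partial>M)
       = (\<integral>\<omega>. \<Phi> (history m \<omega>) * transition_mean \<psi> (urn m \<omega>) \<partial>M)"
proof -
  define step where "step h d = urn_step qX qY (urn_of_history m h)
    (fst (d (Inl (Suc m)))) (fst (d (Inr (Suc m)))) (snd (d (Inr (Suc m))))" for h d
  define f where "f h d = \<Phi> h * \<psi> (urn_of_history m h) (step h d)" for h d
  have [measurable]: "urn_of_history m \<in> borel_measurable (history_space m)" by simp
  have "(\<lambda>p. step (fst p) (snd p)) \<in> borel_measurable (history_space m \<Otimes>\<^sub>M draw_space m)"
    unfolding step_def by measurable
  then have "case_prod f \<in> borel_measurable (history_space m \<Otimes>\<^sub>M draw_space m)"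
    unfolding f_def split_beta' by (intro borel_measurable_times measurable_case_prod_apply[OF \<psi>]) measurable
  moreover have "\<bar>f h d\<bar> \<le> C * D" for h d
    unfolding f_def abs_mult using \<Phi>_bounded \<psi>_bounded by (meson abs_ge_zero mult_mono order_trans)
  ultimately have "(\<integral>\<omega>. f (history m \<omega>) (draw m \<omega>) \<partial>M)
      = (\<integral>\<omega>. (\<integral>\<omega>'. f (history m \<omega>) (draw m \<omega>') \<partial>M) \<partial>M)"
    by (rule integral_history_draw)
  moreover have "f (history m \<omega>) (draw m \<omega>) = \<Phi> (history m \<omega>) * \<psi> (urn m \<omega>) (urn (Suc m) \<omega>)" for \<omega>
    by (simp add: f_def step_def urn_Suc draw_coordinates urn_eq_urn_of_history[of m m])
  moreover have "(\<integral>\<omega>'. f (history m \<omega>) (draw m \<omega>') \<partial>M) = \<Phi> (history m \<omega>) * transition_mean \<psi> (urn m \<omega>)"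
    for \<omega>
  proof -
    have "(\<integral>\<omega>'. f (history m \<omega>) (draw m \<omega>') \<partial>M)
        = \<Phi> (history m \<omega>) * (\<integral>\<omega>'. (if U (Suc m) \<omega>' \<le> urn_fraction (urn m \<omega>)
             then \<psi> (urn m \<omega>) (fst (urn m \<omega>) + qX (V (Suc m) \<omega>'), snd (urn m \<omega>))
             else \<psi> (urn m \<omega>) (fst (urn m \<omega>), snd (urn m \<omega>) + qY (W (Suc m) \<omega>'))) \<partial>M)"
      by (simp add: f_def step_def draw_coordinates urn_step_def
          urn_eq_urn_of_history[of m m, symmetric] if_distrib[of "\<psi> _"])
    also have "\<dots> = \<Phi> (history m \<omega>) * transition_mean \<psi> (urn m \<omega>)"
      using states_fraction_bounds[OF urn_in_states] measurable_transition_sections[OF \<psi>] \<psi>_bounded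
      by (subst integral_draw_choice[where C=D]) (simp_all add: transition_mean_def)
    finally show ?thesis .
  qed
  ultimately show ?thesis by simp
qed

end

text \<open>\<open>mass_decay \<beta> m0\<close> bounds \<open>E exp (- R / \<beta>)\<close> for a single reinforcement \<open>R\<close>, and
  \<open>inverse_square_bound \<beta> m0 n0 k\<close> bounds \<open>E (1 / T\<^sub>k\<^sup>2)\<close>.\<close>

definition mass_decay :: "real \<Rightarrow> real \<Rightarrow> real" where
  "mass_decay \<beta> m0 = 1 - m0 / (2 * \<beta>)"

definition decay_exponent :: "real \<Rightarrow> real \<Rightarrow> real" where
  "decay_exponent \<beta> m0 = - ln (mass_decay \<beta> m0) / 2"

definition inverse_square_bound :: "real \<Rightarrow> real \<Rightarrow> nat \<Rightarrow> nat \<Rightarrow> real" where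
  "inverse_square_bound \<beta> m0 n0 k =
     1 / (\<beta> * decay_exponent \<beta> m0 * real k)\<^sup>2 + (real n0)\<^sup>2 * exp (- decay_exponent \<beta> m0) ^ k"

definition inverse_square_tail :: "real \<Rightarrow> real \<Rightarrow> nat \<Rightarrow> nat \<Rightarrow> real" where
  "inverse_square_tail \<beta> m0 n0 n = (\<Sum>j. inverse_square_bound \<beta> m0 n0 (j + n))"

definition l1_error_bound :: "real \<Rightarrow> real \<Rightarrow> nat \<Rightarrow> nat \<Rightarrow> real" where
  "l1_error_bound \<beta> m0 n0 n =
     \<beta>\<^sup>2 * inverse_square_tail \<beta> m0 n0 n + 2 * \<beta> * sqrt (inverse_square_tail \<beta> m0 n0 n)"

context
  fixes \<beta> m0 :: real
  assumes m0_pos: "0 < m0" and m0_le: "m0 \<le> \<beta>"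
begin

lemma mass_decay_bounds: "0 < mass_decay \<beta> m0" "mass_decay \<beta> m0 < 1"
  using m0_pos m0_le by (auto simp: mass_decay_def field_simps)

lemma decay_exponent_pos: "0 < decay_exponent \<beta> m0"
  using mass_decay_bounds by (simp add: decay_exponent_def)

lemma mass_decay_eq_exp: "mass_decay \<beta> m0 = exp (- 2 * decay_exponent \<beta> m0)"
  using mass_decay_bounds by (simp add: decay_exponent_def)

lemma inverse_square_bound_nonneg: "0 \<le> inverse_square_bound \<beta> m0 n0 k"
  by (simp add: inverse_square_bound_def)

lemma summable_inverse_square_bound: "summable (inverse_square_bound \<beta> m0 n0)"
proof -
  define c where "c = \<beta> * decay_exponent \<beta> m0"
  have summable: "summable (\<lambda>k. (1 / c\<^sup>2) * inverse (real k ^ 2))"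
    by (rule summable_mult[OF inverse_power_summable]) simp
  have eq: "(\<lambda>k. (1 / c\<^sup>2) * inverse (real k ^ 2)) = (\<lambda>k. 1 / (c * real k)\<^sup>2)"
    by (simp add: field_simps power_mult_distrib)
  have "summable (\<lambda>k. 1 / (c * real k)\<^sup>2)" using summable unfolding eq .
  moreover have "summable (\<lambda>k. (real n0)\<^sup>2 * exp (- decay_exponent \<beta> m0) ^ k)"
    using decay_exponent_pos by (intro summable_mult summable_geometric) simp
  ultimately show ?thesis
    unfolding inverse_square_bound_def[abs_def] c_def[symmetric] by (rule summable_add)
qed

lemma sum_inverse_square_bound_le_tail:
  "n \<le> m \<Longrightarrow> (\<Sum>k\<in>{n..<m}. inverse_square_bound \<beta> m0 n0 k) \<le> inverse_square_tail \<beta> m0 n0 n"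
  using sum_le_suminf[OF summable_ignore_initial_segment[OF summable_inverse_square_bound, where k=n],
      of "{0..<m - n}"] sum.shift_bounds_nat_ivl[of "inverse_square_bound \<beta> m0 n0" 0 n "m - n"]
  by (simp add: inverse_square_tail_def inverse_square_bound_nonneg)

lemma inverse_square_tail_nonneg: "0 \<le> inverse_square_tail \<beta> m0 n0 n"
  unfolding inverse_square_tail_def
  by (intro suminf_nonneg summable_ignore_initial_segment summable_inverse_square_bound
      inverse_square_bound_nonneg)

lemma l1_error_bound_tendsto_0: "l1_error_bound \<beta> m0 n0 \<longlonglongrightarrow> 0"
proof -
  let ?c = "inverse_square_bound \<beta> m0 n0"
  have "(\<lambda>n. (\<Sum>j. ?c j) - (\<Sum>i<n. ?c i)) \<longlonglongrightarrow> (\<Sum>j. ?c j) - (\<Sum>j. ?c j)"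
    by (intro tendsto_intros summable_LIMSEQ summable_inverse_square_bound)
  then have "inverse_square_tail \<beta> m0 n0 \<longlonglongrightarrow> 0"
    by (simp add: inverse_square_tail_def[abs_def]
        suminf_minus_initial_segment[OF summable_inverse_square_bound])
  then have "(\<lambda>n. \<beta>\<^sup>2 * inverse_square_tail \<beta> m0 n0 n + 2 * \<beta> * sqrt (inverse_square_tail \<beta> m0 n0 n))
      \<longlonglongrightarrow> \<beta>\<^sup>2 * 0 + 2 * \<beta> * sqrt 0"
    by (intro tendsto_intros)
  then show ?thesis by (simp add: l1_error_bound_def[abs_def])
qed

end

locale rru_model = driving_noise_space M U V W for M :: "'a measure" and U V W +
  fixes \<mu> \<nu> :: "real measure" and \<beta> m0 x y :: real and n0 :: nat
  assumes in_P: "in_P \<beta> m0 \<mu> \<nu>" and m0_pos: "0 < m0" and m0_le: "m0 \<le> \<beta>"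
    and x_nonneg: "0 \<le> x" and y_nonneg: "0 \<le> y"
    and n0_pos: "1 \<le> n0" and initial_mass: "1 / real n0 \<le> x + y"
begin

lemma real_distribution_on: "real_distribution_on \<mu> \<beta>" "real_distribution_on \<nu> \<beta>"
  using in_P by (simp_all add: in_P_def real_distribution_on_def real_distribution_on_axioms_def
      real_distribution_def real_distribution_axioms_def)

lemma \<beta>_pos: "0 < \<beta>"
  using m0_pos m0_le by simp

abbreviation qX :: "real \<Rightarrow> real" where "qX \<equiv> clamped_quantile \<beta> \<mu>"
abbreviation qY :: "real \<Rightarrow> real" where "qY \<equiv> clamped_quantile \<beta> \<nu>"

lemma qX_bounds: "0 \<le> qX v \<and> qX v \<le> \<beta>" and qY_bounds: "0 \<le> qY v \<and> qY v \<le> \<beta>"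
  by (rule real_distribution_on.clamped_quantile_bounds[OF real_distribution_on(1)]
        real_distribution_on.clamped_quantile_bounds[OF real_distribution_on(2)])+

end

sublocale rru_model \<subseteq> urn_process M U V W qX qY x y
proof
  show "qX \<in> borel_measurable borel" "qY \<in> borel_measurable borel"
    by (rule real_distribution_on.measurable_clamped_quantile[OF real_distribution_on(1)]
          real_distribution_on.measurable_clamped_quantile[OF real_distribution_on(2)])+
  show "0 \<le> qX v" "0 \<le> qY v" for v using qX_bounds qY_bounds by auto
  have "0 < 1 / real n0" using n0_pos by simp
  then show "0 < x + y" using initial_mass by linarith
qed (use x_nonneg y_nonneg in simp_all)

context rru_model
begin

definition reinforcement_mean :: real where
  "reinforcement_mean = (\<integral>k. k \<partial>\<mu>)"

lemma integral_quantile_eq_mean: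
  "(\<integral>v. qX v \<partial>uniform_unit) = reinforcement_mean" "(\<integral>v. qY v \<partial>uniform_unit) = reinforcement_mean"
  using in_P real_distribution_on[THEN real_distribution_on.integral_clamped_quantile]
  by (simp_all add: reinforcement_mean_def in_P_def)

lemma reinforcement_mean_bounds: "m0 \<le> reinforcement_mean" "reinforcement_mean \<le> \<beta>"
proof -
  interpret uniform: prob_space uniform_unit by (rule prob_space_uniform_unit)
  show "m0 \<le> reinforcement_mean" using in_P by (simp add: reinforcement_mean_def in_P_def)
  have "integrable uniform_unit qX"
    by (rule uniform.integrable_bounded[where C=\<beta>]) (use qX_bounds \<beta>_pos in auto)
  then have "(\<integral>v. qX v \<partial>uniform_unit) \<le> \<beta>"
    by (rule uniform.integral_le_const) (use qX_bounds in simp)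
  then show "reinforcement_mean \<le> \<beta>" by (simp add: integral_quantile_eq_mean)
qed

lemma integral_exp_reinforcement_le:
  assumes [measurable]: "q \<in> borel_measurable borel" and q: "\<And>v. 0 \<le> q v \<and> q v \<le> \<beta>"
    and mean: "(\<integral>v. q v \<partial>uniform_unit) = reinforcement_mean"
  shows "(\<integral>v. exp (- q v / \<beta>) \<partial>uniform_unit) \<le> mass_decay \<beta> m0"
proof -
  interpret uniform: prob_space uniform_unit by (rule prob_space_uniform_unit)
  have integrable: "integrable uniform_unit q"
    by (rule uniform.integrable_bounded[where C=\<beta>]) (use q \<beta>_pos in auto)
  have "(\<integral>v. exp (- q v / \<beta>) \<partial>uniform_unit) \<le> (\<integral>v. 1 - q v / (2 * \<beta>) \<partial>uniform_unit)"
  proof (intro integral_mono)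
    show "exp (- q v / \<beta>) \<le> 1 - q v / (2 * \<beta>)" for v
      using exp_neg_le_one_minus_half[of "q v / \<beta>"] q[of v] \<beta>_pos by simp
    show "integrable uniform_unit (\<lambda>v. exp (- q v / \<beta>))"
      using q \<beta>_pos by (intro uniform.integrable_bounded[where C=1]) auto
    show "integrable uniform_unit (\<lambda>v. 1 - q v / (2 * \<beta>))"
      using integrable by simp
  qed
  also have "\<dots> = 1 - reinforcement_mean / (2 * \<beta>)"
    using integrable by (simp add: mean)
  also have "\<dots> \<le> mass_decay \<beta> m0"
    using reinforcement_mean_bounds \<beta>_pos by (simp add: mass_decay_def divide_right_mono)
  finally show ?thesis .
qed

section \<open>Growth of the total mass\<close>

text \<open>Capped at 1 so that it is bounded off the reachable states as well.\<close>

definition exp_weight :: "real \<times> real \<Rightarrow> real" where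
  "exp_weight t = min 1 (exp (- (fst t + snd t) / \<beta>))"

lemma measurable_exp_weight[measurable]: "exp_weight \<in> borel_measurable borel"
  unfolding exp_weight_def[abs_def] by measurable

lemma exp_weight_bounds: "0 \<le> exp_weight t \<and> exp_weight t \<le> 1"
  by (simp add: exp_weight_def)

lemma exp_weight_eq: "0 \<le> fst t + snd t \<Longrightarrow> exp_weight t = exp (- (fst t + snd t) / \<beta>)"
proof -
  assume "0 \<le> fst t + snd t"
  then have "- (fst t + snd t) / \<beta> \<le> 0" using \<beta>_pos by (simp add: divide_nonpos_pos)
  then show ?thesis by (simp add: exp_weight_def)
qed

lemma transition_mean_exp_weight_le:
  assumes s: "s \<in> states"
  shows "transition_mean (\<lambda>_. exp_weight) s \<le> mass_decay \<beta> m0 * exp_weight s"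
proof -
  define A where "A = (\<integral>v. exp (- qX v / \<beta>) \<partial>uniform_unit)"
  define B where "B = (\<integral>w. exp (- qY w / \<beta>) \<partial>uniform_unit)"
  have A: "A \<le> mass_decay \<beta> m0" and B: "B \<le> mass_decay \<beta> m0"
    unfolding A_def B_def
    by (rule integral_exp_reinforcement_le; use qX_bounds qY_bounds integral_quantile_eq_mean in simp)+
  have mass: "0 \<le> fst s + snd s" using states_mass_pos[OF s] by simp
  have "exp_weight (fst s + r, snd s) = exp_weight s * exp (- r / \<beta>)"
    and "exp_weight (fst s, snd s + r) = exp_weight s * exp (- r / \<beta>)" if "0 \<le> r" for r
    using mass that by (simp_all add: exp_weight_eq exp_add[symmetric] diff_divide_distrib[symmetric])
  then have "transition_mean (\<lambda>_. exp_weight) s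
      = urn_fraction s * (exp_weight s * A) + (1 - urn_fraction s) * (exp_weight s * B)"
    using qX_bounds qY_bounds by (simp add: transition_mean_def A_def B_def)
  also have "\<dots> \<le> urn_fraction s * (exp_weight s * mass_decay \<beta> m0)
      + (1 - urn_fraction s) * (exp_weight s * mass_decay \<beta> m0)"
    using states_fraction_bounds[OF s] exp_weight_bounds[of s] A B
    by (intro add_mono mult_left_mono) auto
  finally show ?thesis by (simp add: algebra_simps)
qed

lemma integral_exp_weight_urn_le: "(\<integral>\<omega>. exp_weight (urn k \<omega>) \<partial>M) \<le> mass_decay \<beta> m0 ^ k"
proof (induction k)
  case 0
  show ?case using exp_weight_bounds by (intro integral_le_const integrable_bounded[where C=1]) auto
next
  case (Suc m)
  have "(\<integral>\<omega>. exp_weight (urn (Suc m) \<omega>) \<partial>M) = (\<integral>\<omega>. 1 * exp_weight (urn (Suc m) \<omega>) \<partial>M)"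
    by simp
  also have "\<dots> = (\<integral>\<omega>. 1 * transition_mean (\<lambda>_. exp_weight) (urn m \<omega>) \<partial>M)"
    using exp_weight_bounds
    by (intro integral_history_transition[where C=1 and D=1 and \<Phi>="\<lambda>_. 1"]) auto
  also have "\<dots> \<le> (\<integral>\<omega>. mass_decay \<beta> m0 * exp_weight (urn m \<omega>) \<partial>M)"
  proof (intro integral_mono)
    show "integrable M (\<lambda>\<omega>. 1 * transition_mean (\<lambda>_. exp_weight) (urn m \<omega>))"
      using transition_mean_bounded[of "\<lambda>_. exp_weight" 1, OF _ _ urn_in_states] exp_weight_bounds
      by (intro integrable_bounded[where C=1]) auto
    show "integrable M (\<lambda>\<omega>. mass_decay \<beta> m0 * exp_weight (urn m \<omega>))"
      using exp_weight_bounds by (intro integrable_mult_right integrable_bounded[where C=1]) auto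
  qed (simp add: transition_mean_exp_weight_le[OF urn_in_states])
  also have "\<dots> \<le> mass_decay \<beta> m0 * mass_decay \<beta> m0 ^ m"
    using Suc mass_decay_bounds[OF m0_pos m0_le] by (simp add: mult_left_mono)
  finally show ?case by simp
qed

definition mass :: "nat \<Rightarrow> 'a \<Rightarrow> real" where
  "mass k \<omega> = fst (urn k \<omega>) + snd (urn k \<omega>)"

lemma measurable_mass[measurable]: "mass k \<in> borel_measurable M"
  unfolding mass_def[abs_def] by measurable

lemma mass_ge: "1 / real n0 \<le> mass k \<omega>"
  using urn_in_states[of k \<omega>] initial_mass by (simp add: states_def mass_def)

lemma mass_pos: "0 < mass k \<omega>"
proof -
  have "0 < 1 / real n0" using n0_pos by simp
  then show ?thesis using mass_ge[of k \<omega>] by linarith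
qed

lemma inverse_square_mass_le: "1 / (mass k \<omega>)\<^sup>2 \<le> (real n0)\<^sup>2"
proof -
  have "1 / mass k \<omega> \<le> real n0"
    using mass_ge[of k \<omega>] mass_pos[of k \<omega>] n0_pos by (simp add: field_simps)
  then show ?thesis
    using power_mono[of "1 / mass k \<omega>" "real n0" 2] mass_pos[of k \<omega>] by (simp add: power_divide)
qed

lemma integrable_inverse_square_mass: "integrable M (\<lambda>\<omega>. 1 / (mass k \<omega>)\<^sup>2)"
  using inverse_square_mass_le by (intro integrable_bounded[where C="(real n0)\<^sup>2"]) auto

text \<open>Above the threshold \<open>L\<close> the first summand dominates, below it the second is at least
  \<open>n0\<^sup>2\<close>; integrating gives a Chernoff-type bound.\<close>

lemma inverse_square_mass_le_exp_weight:
  assumes L: "0 < L"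
  shows "1 / (mass k \<omega>)\<^sup>2 \<le> 1 / L\<^sup>2 + (real n0)\<^sup>2 * exp (L / \<beta>) * exp_weight (urn k \<omega>)"
proof (cases "L \<le> mass k \<omega>")
  case True
  then have "1 / (mass k \<omega>)\<^sup>2 \<le> 1 / L\<^sup>2" using L by (intro divide_left_mono power_mono) auto
  then show ?thesis using exp_weight_bounds[of "urn k \<omega>"] by (simp add: add_increasing2)
next
  case False
  have "exp_weight (urn k \<omega>) = exp (- mass k \<omega> / \<beta>)"
    using mass_pos[of k \<omega>] by (simp add: exp_weight_eq mass_def)
  with False have "1 \<le> exp (L / \<beta>) * exp_weight (urn k \<omega>)"
    using \<beta>_pos by (simp add: field_simps flip: exp_add)
  then have "(real n0)\<^sup>2 \<le> (real n0)\<^sup>2 * exp (L / \<beta>) * exp_weight (urn k \<omega>)"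
    by (metis mult.assoc mult_left_mono mult_1_right zero_le_power2)
  then show ?thesis using inverse_square_mass_le[of k \<omega>] by (simp add: add_increasing)
qed

lemma integral_inverse_square_mass_le:
  "(\<integral>\<omega>. 1 / (mass k \<omega>)\<^sup>2 \<partial>M) \<le> inverse_square_bound \<beta> m0 n0 k"
proof (cases "k = 0")
  case True
  then show ?thesis using inverse_square_mass_le
    by (auto simp: inverse_square_bound_def intro!: integral_le_const integrable_inverse_square_mass)
next
  case False
  define c where "c = decay_exponent \<beta> m0"
  define L where "L = \<beta> * c * real k"
  have L: "0 < L"
    using \<beta>_pos decay_exponent_pos[OF m0_pos m0_le] False by (simp add: L_def c_def)
  have "(\<integral>\<omega>. 1 / (mass k \<omega>)\<^sup>2 \<partial>M)
      \<le> (\<integral>\<omega>. 1 / L\<^sup>2 + (real n0)\<^sup>2 * exp (L / \<beta>) * exp_weight (urn k \<omega>) \<partial>M)"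
    using exp_weight_bounds inverse_square_mass_le_exp_weight[OF L]
    by (intro integral_mono integrable_inverse_square_mass integrable_bounded
        [where C="1 / L\<^sup>2 + (real n0)\<^sup>2 * exp (L / \<beta>)"]) (auto simp: mult_left_le)
  also have "\<dots> = 1 / L\<^sup>2 + (real n0)\<^sup>2 * exp (L / \<beta>) * (\<integral>\<omega>. exp_weight (urn k \<omega>) \<partial>M)"
    using exp_weight_bounds by (simp add: integrable_bounded[where C=1] prob_space)
  also have "\<dots> \<le> 1 / L\<^sup>2 + (real n0)\<^sup>2 * exp (L / \<beta>) * mass_decay \<beta> m0 ^ k"
    using integral_exp_weight_urn_le by (intro add_left_mono mult_left_mono) auto
  also have "\<dots> = 1 / L\<^sup>2 + (real n0)\<^sup>2 * exp (- c) ^ k"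
    using \<beta>_pos by (simp add: L_def mass_decay_eq_exp[OF m0_pos m0_le] c_def mult.assoc
        flip: exp_of_nat_mult exp_add)
  finally show ?thesis by (simp add: inverse_square_bound_def L_def c_def mult.assoc)
qed

section \<open>Drift and martingale part\<close>

text \<open>On transitions of the urn this is the increment of the fraction (which lies in
  \<open>[-1, 1]\<close>); the clipping only makes it bounded on all pairs of states.\<close>

definition clipped_increment :: "real \<times> real \<Rightarrow> real \<times> real \<Rightarrow> real" where
  "clipped_increment s t = max (- 1) (min 1 (urn_fraction t - urn_fraction s))"

definition drift :: "real \<times> real \<Rightarrow> real" where
  "drift = transition_mean clipped_increment"

lemma measurable_clipped_increment: "case_prod clipped_increment \<in> borel_measurable borel"
  unfolding clipped_increment_def[abs_def] split_beta' by measurable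

lemma abs_clipped_increment_le: "\<bar>clipped_increment s t\<bar> \<le> 1"
  by (simp add: clipped_increment_def)

lemma measurable_drift[measurable]: "drift \<in> borel_measurable borel"
  unfolding drift_def by (rule measurable_transition_mean[OF measurable_clipped_increment])

lemma abs_drift_le_1: "s \<in> states \<Longrightarrow> \<bar>drift s\<bar> \<le> 1"
  unfolding drift_def by (rule transition_mean_bounded[OF measurable_clipped_increment abs_clipped_increment_le])

lemma clipped_increment_eq:
  assumes s: "s \<in> states" and r: "0 \<le> r"
  shows "clipped_increment s (fst s + r, snd s) = (1 - urn_fraction s) * (r / (fst s + snd s + r))"
    and "clipped_increment s (fst s, snd s + r) = - (urn_fraction s * (r / (fst s + snd s + r)))"
proof -
  have "r / (fst s + snd s + r) \<le> 1" using states_mass_pos[OF s] r by simp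
  then show "clipped_increment s (fst s + r, snd s) = (1 - urn_fraction s) * (r / (fst s + snd s + r))"
    "clipped_increment s (fst s, snd s + r) = - (urn_fraction s * (r / (fst s + snd s + r)))"
    using abs_urn_fraction_increments_le[OF s r]
    unfolding clipped_increment_def urn_fraction_increments[OF s r, symmetric] by (simp_all add: abs_le_iff)
qed

lemma clipped_increment_urn_step:
  assumes s: "s \<in> states"
  shows "clipped_increment s (urn_step qX qY s u v w) = urn_fraction (urn_step qX qY s u v w) - urn_fraction s"
    and "\<bar>clipped_increment s (urn_step qX qY s u v w)\<bar> \<le> \<beta> / (fst s + snd s)"
proof -
  obtain t r where t: "t = (fst s + r, snd s) \<or> t = (fst s, snd s + r)" and r: "0 \<le> r" "r \<le> \<beta>"
    and step: "urn_step qX qY s u v w = t"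
  proof (cases "u \<le> urn_fraction s")
    case True
    then show ?thesis using that[of "(fst s + qX v, snd s)" "qX v"] qX_bounds[of v] by (simp add: urn_step_def)
  next
    case False
    then show ?thesis using that[of "(fst s, snd s + qY w)" "qY w"] qY_bounds[of w] by (simp add: urn_step_def)
  qed
  from t have increment: "clipped_increment s t = urn_fraction t - urn_fraction s"
    and "\<bar>urn_fraction t - urn_fraction s\<bar> \<le> r / (fst s + snd s + r)"
    using clipped_increment_eq[OF s r(1)] urn_fraction_increments[OF s r(1)]
      abs_urn_fraction_increments_le[OF s r(1)] by auto
  moreover have "r / (fst s + snd s + r) \<le> \<beta> / (fst s + snd s)"
    using states_mass_pos[OF s] r by (intro frac_le) auto
  ultimately show "clipped_increment s (urn_step qX qY s u v w) = urn_fraction (urn_step qX qY s u v w) - urn_fraction s"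
    and "\<bar>clipped_increment s (urn_step qX qY s u v w)\<bar> \<le> \<beta> / (fst s + snd s)"
    by (simp_all add: step increment)
qed

definition mean_ratio :: "(real \<Rightarrow> real) \<Rightarrow> real \<Rightarrow> real" where
  "mean_ratio q T = (\<integral>v. q v / (T + q v) \<partial>uniform_unit)"

lemma drift_eq:
  assumes s: "s \<in> states"
  shows "drift s = urn_fraction s * (1 - urn_fraction s)
    * (mean_ratio qX (fst s + snd s) - mean_ratio qY (fst s + snd s))"
proof -
  have "(\<integral>v. clipped_increment s (fst s + qX v, snd s) \<partial>uniform_unit)
      = (\<integral>v. (1 - urn_fraction s) * (qX v / (fst s + snd s + qX v)) \<partial>uniform_unit)"
    using qX_bounds by (intro Bochner_Integration.integral_cong) (simp_all add: clipped_increment_eq[OF s])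
  moreover have "(\<integral>w. clipped_increment s (fst s, snd s + qY w) \<partial>uniform_unit)
      = (\<integral>w. - urn_fraction s * (qY w / (fst s + snd s + qY w)) \<partial>uniform_unit)"
    using qY_bounds by (intro Bochner_Integration.integral_cong) (simp_all add: clipped_increment_eq[OF s])
  ultimately have red: "(\<integral>v. clipped_increment s (fst s + qX v, snd s) \<partial>uniform_unit)
      = (1 - urn_fraction s) * mean_ratio qX (fst s + snd s)"
    and black: "(\<integral>w. clipped_increment s (fst s, snd s + qY w) \<partial>uniform_unit)
      = - urn_fraction s * mean_ratio qY (fst s + snd s)"
    unfolding mean_ratio_def by (simp_all only: integral_mult_right_zero)
  show ?thesis unfolding drift_def transition_mean_def red black by (simp add: algebra_simps)
qed

lemma mean_ratio_bounds:
  assumes [measurable]: "q \<in> borel_measurable borel" and q: "\<And>v. 0 \<le> q v \<and> q v \<le> \<beta>"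
    and mean: "(\<integral>v. q v \<partial>uniform_unit) = reinforcement_mean" and T: "0 < T"
  shows "reinforcement_mean / T - \<beta> * reinforcement_mean / T\<^sup>2 \<le> mean_ratio q T"
    and "mean_ratio q T \<le> reinforcement_mean / T" and "0 \<le> mean_ratio q T"
proof -
  interpret uniform: prob_space uniform_unit by (rule prob_space_uniform_unit)
  have integrable: "integrable uniform_unit q"
    by (rule uniform.integrable_bounded[where C=\<beta>]) (use q \<beta>_pos in auto)
  have "\<bar>q v / (T + q v)\<bar> \<le> 1" for v
  proof -
    have "0 \<le> q v / (T + q v)" "q v / (T + q v) \<le> 1" using q[of v] T by (simp_all add: divide_simps)
    then show ?thesis by (metis abs_of_nonneg)
  qed
  then have integrable_ratio: "integrable uniform_unit (\<lambda>v. q v / (T + q v))"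
    by (intro uniform.integrable_bounded[where C=1]) auto
  have "q v / T - \<beta> * q v / T\<^sup>2 \<le> q v / (T + q v)" for v
  proof -
    have "q v / T - q v / (T + q v) = q v * q v / (T * (T + q v))"
      using T q[of v] by (simp add: field_simps)
    also have "\<dots> \<le> \<beta> * q v / T\<^sup>2"
      using T q[of v] by (intro frac_le) (auto simp: power2_eq_square mult_right_mono)
    finally show ?thesis by simp
  qed
  then have "(\<integral>v. q v / T - \<beta> * q v / T\<^sup>2 \<partial>uniform_unit) \<le> mean_ratio q T"
    unfolding mean_ratio_def using integrable integrable_ratio by (intro integral_mono) auto
  then show "reinforcement_mean / T - \<beta> * reinforcement_mean / T\<^sup>2 \<le> mean_ratio q T"
    using integrable by (simp add: mean)
  have "mean_ratio q T \<le> (\<integral>v. q v / T \<partial>uniform_unit)"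
    unfolding mean_ratio_def using integrable integrable_ratio q T
    by (intro integral_mono) (auto intro!: frac_le)
  then show "mean_ratio q T \<le> reinforcement_mean / T" by (simp add: mean)
  show "0 \<le> mean_ratio q T"
    unfolding mean_ratio_def using q T by (intro integral_nonneg_AE AE_I2) auto
qed

text \<open>The equality of the two mean reinforcements enters here: it makes the two mean ratios
  agree up to \<open>O(1 / T\<^sup>2)\<close>.\<close>

lemma abs_drift_le:
  assumes s: "s \<in> states"
  shows "\<bar>drift s\<bar> \<le> \<beta>\<^sup>2 / (fst s + snd s)\<^sup>2" and "\<bar>drift s\<bar> \<le> \<beta> / (fst s + snd s)"
proof -
  define T where "T = fst s + snd s"
  have T: "0 < T" using states_mass_pos[OF s] by (simp add: T_def)
  note X = mean_ratio_bounds[OF _ qX_bounds integral_quantile_eq_mean(1) T]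
  note Y = mean_ratio_bounds[OF _ qY_bounds integral_quantile_eq_mean(2) T]
  have fraction: "\<bar>urn_fraction s * (1 - urn_fraction s)\<bar> \<le> 1"
    using states_fraction_bounds[OF s] by (auto simp: abs_mult intro: mult_le_one)
  have "\<bar>mean_ratio qX T - mean_ratio qY T\<bar> \<le> \<beta> * reinforcement_mean / T\<^sup>2"
    using X Y by (simp add: abs_le_iff)
  also have "\<dots> \<le> \<beta>\<^sup>2 / T\<^sup>2"
    using reinforcement_mean_bounds \<beta>_pos by (intro divide_right_mono) (auto simp: power2_eq_square)
  finally have "\<bar>urn_fraction s * (1 - urn_fraction s)\<bar> * \<bar>mean_ratio qX T - mean_ratio qY T\<bar>
      \<le> 1 * (\<beta>\<^sup>2 / T\<^sup>2)"
    using fraction by (intro mult_mono) auto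
  then show "\<bar>drift s\<bar> \<le> \<beta>\<^sup>2 / (fst s + snd s)\<^sup>2"
    unfolding drift_eq[OF s] T_def[symmetric] abs_mult by simp
  have "\<bar>mean_ratio qX T - mean_ratio qY T\<bar> \<le> reinforcement_mean / T"
    using X Y by (simp add: abs_le_iff)
  also have "\<dots> \<le> \<beta> / T"
    using reinforcement_mean_bounds T by (intro divide_right_mono) auto
  finally have "\<bar>urn_fraction s * (1 - urn_fraction s)\<bar> * \<bar>mean_ratio qX T - mean_ratio qY T\<bar>
      \<le> 1 * (\<beta> / T)"
    using fraction by (intro mult_mono) auto
  then show "\<bar>drift s\<bar> \<le> \<beta> / (fst s + snd s)"
    unfolding drift_eq[OF s] T_def[symmetric] abs_mult by simp
qed

definition innovation :: "nat \<Rightarrow> 'a \<Rightarrow> real" where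
  "innovation k \<omega> = clipped_increment (urn k \<omega>) (urn (Suc k) \<omega>) - drift (urn k \<omega>)"

definition martingale :: "nat \<Rightarrow> nat \<Rightarrow> 'a \<Rightarrow> real" where
  "martingale n m \<omega> = (\<Sum>k\<in>{n..<m}. innovation k \<omega>)"

lemma measurable_innovation[measurable]: "innovation k \<in> borel_measurable M"
  unfolding innovation_def[abs_def]
  by (intro borel_measurable_diff measurable_case_prod_apply[OF measurable_clipped_increment]) measurable

lemma measurable_martingale[measurable]: "martingale n m \<in> borel_measurable M"
  unfolding martingale_def[abs_def] by measurable

lemma abs_innovation_le_2: "\<bar>innovation k \<omega>\<bar> \<le> 2"
  using abs_clipped_increment_le[of "urn k \<omega>" "urn (Suc k) \<omega>"] abs_drift_le_1[OF urn_in_states, of k \<omega>]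
  by (simp add: innovation_def)

lemma abs_innovation_le: "\<bar>innovation k \<omega>\<bar> \<le> 2 * \<beta> / mass k \<omega>"
proof -
  have "\<bar>clipped_increment (urn k \<omega>) (urn (Suc k) \<omega>)\<bar> \<le> \<beta> / mass k \<omega>"
    "\<bar>drift (urn k \<omega>)\<bar> \<le> \<beta> / mass k \<omega>"
    using clipped_increment_urn_step(2)[OF urn_in_states] abs_drift_le(2)[OF urn_in_states, of k \<omega>]
    by (simp_all add: urn_Suc mass_def)
  moreover have "2 * \<beta> / mass k \<omega> = \<beta> / mass k \<omega> + \<beta> / mass k \<omega>" by simp
  ultimately show ?thesis unfolding innovation_def by linarith
qed

lemma square_innovation_le: "(innovation k \<omega>)\<^sup>2 \<le> 4 * \<beta>\<^sup>2 * (1 / (mass k \<omega>)\<^sup>2)"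
proof -
  have "(innovation k \<omega>)\<^sup>2 \<le> (2 * \<beta> / mass k \<omega>)\<^sup>2"
    using power_mono[OF abs_innovation_le[of k \<omega>] abs_ge_zero, of 2] by simp
  then show ?thesis by (simp add: power_divide power_mult_distrib)
qed

lemma abs_martingale_le: "\<bar>martingale n m \<omega>\<bar> \<le> 2 * real m"
proof -
  have "\<bar>martingale n m \<omega>\<bar> \<le> (\<Sum>k\<in>{n..<m}. \<bar>innovation k \<omega>\<bar>)"
    unfolding martingale_def by (rule sum_abs)
  also have "\<dots> \<le> real (card {n..<m}) * 2" by (rule sum_bounded_above) (rule abs_innovation_le_2)
  also have "\<dots> \<le> 2 * real m" by simp
  finally show ?thesis .
qed

lemma integral_martingale_times_innovation: "(\<integral>\<omega>. martingale n m \<omega> * innovation m \<omega> \<partial>M) = 0"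
proof -
  define \<Phi> where "\<Phi> h = (\<Sum>k\<in>{n..<m}. clipped_increment (urn_of_history k h) (urn_of_history (Suc k) h)
    - drift (urn_of_history k h))" for h
  have martingale: "martingale n m \<omega> = \<Phi> (history m \<omega>)" for \<omega>
    unfolding martingale_def \<Phi>_def innovation_def by (auto intro!: sum.cong simp: urn_eq_urn_of_history[where m=m])
  have "\<Phi> \<in> borel_measurable (history_space m)"
    unfolding \<Phi>_def[abs_def]
    by (intro borel_measurable_sum borel_measurable_diff
        measurable_case_prod_apply[OF measurable_clipped_increment]) auto
  moreover have "\<bar>\<Phi> h\<bar> \<le> 2 * real m" for h
  proof -
    have "\<bar>clipped_increment (urn_of_history k h) (urn_of_history (Suc k) h) - drift (urn_of_history k h)\<bar> \<le> 2"
      for k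
      using abs_clipped_increment_le[of "urn_of_history k h" "urn_of_history (Suc k) h"]
        abs_drift_le_1[OF urn_of_history_in_states, of k h] by linarith
    then have "\<bar>\<Phi> h\<bar> \<le> real (card {n..<m}) * 2"
      unfolding \<Phi>_def by (intro order_trans[OF sum_abs] sum_bounded_above)
    then show ?thesis by simp
  qed
  ultimately have "(\<integral>\<omega>. martingale n m \<omega> * clipped_increment (urn m \<omega>) (urn (Suc m) \<omega>) \<partial>M)
      = (\<integral>\<omega>. martingale n m \<omega> * drift (urn m \<omega>) \<partial>M)"
    unfolding martingale drift_def
    by (rule integral_history_transition[OF _ _ measurable_clipped_increment abs_clipped_increment_le])
  moreover have bounded: "\<bar>martingale n m \<omega> * c\<bar> \<le> 2 * real m" if "\<bar>c\<bar> \<le> 1" for \<omega> c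
    using mult_mono[OF abs_martingale_le that] by (simp add: abs_mult)
  have "integrable M (\<lambda>\<omega>. martingale n m \<omega> * clipped_increment (urn m \<omega>) (urn (Suc m) \<omega>))"
    using bounded[OF abs_clipped_increment_le]
    by (intro integrable_bounded[where C="2 * real m"] borel_measurable_times
        measurable_case_prod_apply[OF measurable_clipped_increment]) auto
  moreover have "integrable M (\<lambda>\<omega>. martingale n m \<omega> * drift (urn m \<omega>))"
    using bounded[OF abs_drift_le_1[OF urn_in_states]] by (intro integrable_bounded) auto
  ultimately show ?thesis by (simp add: innovation_def right_diff_distrib)
qed

lemma integral_square_martingale_le:
  "n \<le> m \<Longrightarrow> (\<integral>\<omega>. (martingale n m \<omega>)\<^sup>2 \<partial>M)
     \<le> 4 * \<beta>\<^sup>2 * (\<Sum>k\<in>{n..<m}. \<integral>\<omega>. 1 / (mass k \<omega>)\<^sup>2 \<partial>M)"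
proof (induction m rule: nat_induct_at_least)
  case base
  then show ?case by (simp add: martingale_def)
next
  case (Suc m)
  have "\<bar>(martingale n m \<omega>)\<^sup>2\<bar> \<le> (2 * real m)\<^sup>2" for \<omega>
    using power_mono[OF abs_martingale_le abs_ge_zero, of n m \<omega> 2] by simp
  then have square: "integrable M (\<lambda>\<omega>. (martingale n m \<omega>)\<^sup>2)"
    by (intro integrable_bounded) auto
  have "\<bar>2 * (martingale n m \<omega> * innovation m \<omega>)\<bar> \<le> 2 * (2 * real m * 2)" for \<omega>
    using mult_mono[OF abs_martingale_le[of n m \<omega>] abs_innovation_le_2[of m \<omega>]] by (simp add: abs_mult mult.commute)
  then have product: "integrable M (\<lambda>\<omega>. 2 * (martingale n m \<omega> * innovation m \<omega>))"
    by (intro integrable_bounded) auto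
  have "\<bar>(innovation m \<omega>)\<^sup>2\<bar> \<le> 2\<^sup>2" for \<omega>
    using power_mono[OF abs_innovation_le_2 abs_ge_zero, of m \<omega> 2] by simp
  then have innovation: "integrable M (\<lambda>\<omega>. (innovation m \<omega>)\<^sup>2)"
    by (intro integrable_bounded) auto
  have "martingale n (Suc m) \<omega> = martingale n m \<omega> + innovation m \<omega>" for \<omega>
    using Suc.hyps by (simp add: martingale_def)
  then have "(\<integral>\<omega>. (martingale n (Suc m) \<omega>)\<^sup>2 \<partial>M)
      = (\<integral>\<omega>. (martingale n m \<omega>)\<^sup>2 + 2 * (martingale n m \<omega> * innovation m \<omega>) + (innovation m \<omega>)\<^sup>2 \<partial>M)"
    by (simp add: power2_sum algebra_simps)
  also have "\<dots> = (\<integral>\<omega>. (martingale n m \<omega>)\<^sup>2 \<partial>M) + (\<integral>\<omega>. (innovation m \<omega>)\<^sup>2 \<partial>M)"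
    using square product innovation by (simp add: integral_martingale_times_innovation)
  also have "(\<integral>\<omega>. (innovation m \<omega>)\<^sup>2 \<partial>M) \<le> (\<integral>\<omega>. 4 * \<beta>\<^sup>2 * (1 / (mass m \<omega>)\<^sup>2) \<partial>M)"
    by (intro integral_mono innovation square_innovation_le integrable_mult_right
        integrable_inverse_square_mass)
  also have "\<dots> = 4 * \<beta>\<^sup>2 * (\<integral>\<omega>. 1 / (mass m \<omega>)\<^sup>2 \<partial>M)"
    by (rule integral_mult_right_zero)
  finally show ?case using Suc.IH Suc.hyps by (simp add: algebra_simps)
qed

lemma urn_fraction_diff_eq:
  "n \<le> m \<Longrightarrow> urn_fraction (urn m \<omega>) - urn_fraction (urn n \<omega>)
     = (\<Sum>k\<in>{n..<m}. drift (urn k \<omega>)) + martingale n m \<omega>"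
proof -
  assume "n \<le> m"
  then have "urn_fraction (urn m \<omega>) - urn_fraction (urn n \<omega>)
      = (\<Sum>k\<in>{n..<m}. urn_fraction (urn (Suc k) \<omega>) - urn_fraction (urn k \<omega>))"
    by (rule sum_Suc_diff'[symmetric])
  also have "\<dots> = (\<Sum>k\<in>{n..<m}. drift (urn k \<omega>) + innovation k \<omega>)"
    by (intro sum.cong refl) (simp add: innovation_def urn_Suc clipped_increment_urn_step(1)[OF urn_in_states])
  finally show ?thesis by (simp add: martingale_def sum.distrib)
qed

lemma integral_abs_urn_fraction_diff_le:
  assumes nm: "n \<le> m"
  defines "B \<equiv> \<Sum>k\<in>{n..<m}. inverse_square_bound \<beta> m0 n0 k"
  shows "(\<integral>\<omega>. \<bar>urn_fraction (urn m \<omega>) - urn_fraction (urn n \<omega>)\<bar> \<partial>M) \<le> \<beta>\<^sup>2 * B + 2 * \<beta> * sqrt B"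
proof -
  have inverse_square: "(\<Sum>k\<in>{n..<m}. \<integral>\<omega>. 1 / (mass k \<omega>)\<^sup>2 \<partial>M) \<le> B"
    unfolding B_def by (intro sum_mono integral_inverse_square_mass_le)
  have drift: "integrable M (\<lambda>\<omega>. \<bar>drift (urn k \<omega>)\<bar>)" for k
    using abs_drift_le_1[OF urn_in_states] by (intro integrable_bounded[where C=1]) auto
  have martingale: "integrable M (martingale n m)"
    using abs_martingale_le by (intro integrable_bounded) auto
  have "\<bar>(martingale n m \<omega>)\<^sup>2\<bar> \<le> (2 * real m)\<^sup>2" for \<omega>
    using power_mono[OF abs_martingale_le abs_ge_zero, of n m \<omega> 2] by simp
  then have square: "integrable M (\<lambda>\<omega>. (martingale n m \<omega>)\<^sup>2)"
    by (intro integrable_bounded) auto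
  have "\<bar>\<bar>urn_fraction (urn m \<omega>) - urn_fraction (urn n \<omega>)\<bar>\<bar> \<le> 1" for \<omega>
    using states_fraction_bounds[OF urn_in_states, of m \<omega>] states_fraction_bounds[OF urn_in_states, of n \<omega>]
    unfolding abs_abs abs_le_iff by linarith
  then have fraction: "integrable M (\<lambda>\<omega>. \<bar>urn_fraction (urn m \<omega>) - urn_fraction (urn n \<omega>)\<bar>)"
    by (intro integrable_bounded) auto
  have "(\<integral>\<omega>. \<bar>urn_fraction (urn m \<omega>) - urn_fraction (urn n \<omega>)\<bar> \<partial>M)
      \<le> (\<integral>\<omega>. (\<Sum>k\<in>{n..<m}. \<bar>drift (urn k \<omega>)\<bar>) + \<bar>martingale n m \<omega>\<bar> \<partial>M)"
    using drift martingale fraction unfolding urn_fraction_diff_eq[OF nm]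
    by (intro integral_mono) (auto intro: order_trans[OF abs_triangle_ineq] add_right_mono sum_abs)
  also have "\<dots> = (\<Sum>k\<in>{n..<m}. \<integral>\<omega>. \<bar>drift (urn k \<omega>)\<bar> \<partial>M) + (\<integral>\<omega>. \<bar>martingale n m \<omega>\<bar> \<partial>M)"
    using drift martingale by simp
  also have "(\<Sum>k\<in>{n..<m}. \<integral>\<omega>. \<bar>drift (urn k \<omega>)\<bar> \<partial>M) \<le> \<beta>\<^sup>2 * B"
  proof -
    have "(\<integral>\<omega>. \<bar>drift (urn k \<omega>)\<bar> \<partial>M) \<le> (\<integral>\<omega>. \<beta>\<^sup>2 * (1 / (mass k \<omega>)\<^sup>2) \<partial>M)" for k
      using abs_drift_le(1)[OF urn_in_states]
      by (intro integral_mono drift integrable_mult_right integrable_inverse_square_mass)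
         (simp add: mass_def)
    then have "(\<integral>\<omega>. \<bar>drift (urn k \<omega>)\<bar> \<partial>M) \<le> \<beta>\<^sup>2 * (\<integral>\<omega>. 1 / (mass k \<omega>)\<^sup>2 \<partial>M)" for k
      by (simp only: integral_mult_right_zero)
    then have "(\<Sum>k\<in>{n..<m}. \<integral>\<omega>. \<bar>drift (urn k \<omega>)\<bar> \<partial>M)
        \<le> \<beta>\<^sup>2 * (\<Sum>k\<in>{n..<m}. \<integral>\<omega>. 1 / (mass k \<omega>)\<^sup>2 \<partial>M)"
      by (simp add: sum_distrib_left sum_mono)
    also have "\<dots> \<le> \<beta>\<^sup>2 * B" using inverse_square by (intro mult_left_mono) auto
    finally show ?thesis .
  qed
  also have "(\<integral>\<omega>. \<bar>martingale n m \<omega>\<bar> \<partial>M) \<le> 2 * \<beta> * sqrt B"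
  proof -
    have "(\<integral>\<omega>. \<bar>martingale n m \<omega>\<bar> \<partial>M) \<le> sqrt (\<integral>\<omega>. (martingale n m \<omega>)\<^sup>2 \<partial>M)"
      by (rule integral_abs_le_sqrt_integral_square[OF martingale square])
    also have "\<dots> \<le> sqrt (4 * \<beta>\<^sup>2 * B)"
      using integral_square_martingale_le[OF nm] inverse_square
      by (intro real_sqrt_le_mono) (meson order_trans mult_left_mono zero_le_mult_iff zero_le_numeral zero_le_power2)
    also have "\<dots> = 2 * \<beta> * sqrt B" using \<beta>_pos by (simp add: real_sqrt_mult)
    finally show ?thesis .
  qed
  finally show ?thesis by simp
qed

section \<open>Convergence in mean\<close>

lemma integral_abs_limit_diff_le:
  assumes [measurable]: "Z \<in> borel_measurable M"
    and limit: "AE \<omega> in M. (\<lambda>k. urn_fraction (urn k \<omega>)) \<longlonglongrightarrow> Z \<omega>"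
  shows "(\<integral>\<omega>. \<bar>Z \<omega> - urn_fraction (urn n \<omega>)\<bar> \<partial>M) \<le> l1_error_bound \<beta> m0 n0 n"
proof -
  have bounded: "\<bar>urn_fraction (urn m \<omega>) - urn_fraction (urn n \<omega>)\<bar> \<le> 1" for m \<omega>
    using states_fraction_bounds[OF urn_in_states, of m \<omega>] states_fraction_bounds[OF urn_in_states, of n \<omega>]
    unfolding abs_le_iff by linarith
  have pointwise: "AE \<omega> in M. (\<lambda>m. \<bar>urn_fraction (urn m \<omega>) - urn_fraction (urn n \<omega>)\<bar>)
      \<longlonglongrightarrow> \<bar>Z \<omega> - urn_fraction (urn n \<omega>)\<bar>"
    using limit by eventually_elim (intro tendsto_intros)
  have "(\<lambda>m. \<integral>\<omega>. \<bar>urn_fraction (urn m \<omega>) - urn_fraction (urn n \<omega>)\<bar> \<partial>M)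
      \<longlonglongrightarrow> (\<integral>\<omega>. \<bar>Z \<omega> - urn_fraction (urn n \<omega>)\<bar> \<partial>M)"
    by (rule integral_dominated_convergence[where w="\<lambda>_. 1", OF _ _ _ pointwise]) (use bounded in auto)
  moreover have "(\<integral>\<omega>. \<bar>urn_fraction (urn m \<omega>) - urn_fraction (urn n \<omega>)\<bar> \<partial>M) \<le> l1_error_bound \<beta> m0 n0 n"
    if "n \<le> m" for m
  proof -
    define B where "B = (\<Sum>k\<in>{n..<m}. inverse_square_bound \<beta> m0 n0 k)"
    have "0 \<le> B" "B \<le> inverse_square_tail \<beta> m0 n0 n"
      using sum_inverse_square_bound_le_tail[OF m0_pos m0_le that]
      by (simp_all add: B_def sum_nonneg inverse_square_bound_nonneg[OF m0_pos m0_le])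
    then have "\<beta>\<^sup>2 * B + 2 * \<beta> * sqrt B \<le> l1_error_bound \<beta> m0 n0 n"
      unfolding l1_error_bound_def using \<beta>_pos by (intro add_mono mult_left_mono real_sqrt_le_mono) auto
    then show ?thesis using integral_abs_urn_fraction_diff_le[OF that] by (simp add: B_def)
  qed
  ultimately show ?thesis by (intro LIMSEQ_le_const2) auto
qed

lemma AE_rru_Z_eq: "AE \<omega> in M. \<forall>k. rru_Z \<mu> \<nu> x y U V W k \<omega> = urn_fraction (urn k \<omega>)"
  using AE_noise_in_open_unit
proof eventually_elim
  case (elim \<omega>)
  have "quantile \<mu> (V i \<omega>) = qX (V i \<omega>) \<and> quantile \<nu> (W i \<omega>) = qY (W i \<omega>)" for i
    using elim[rule_format, of i] by (auto simp: clamped_quantile_def)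
  then have "rru (quantile \<mu>) (quantile \<nu>) x y (\<lambda>i. U i \<omega>) (\<lambda>i. V i \<omega>) (\<lambda>i. W i \<omega>) k = urn k \<omega>" for k
    unfolding urn_def by (intro rru_cong) simp
  then show ?case by (simp add: rru_Z_def urn_fraction_def split: prod.split)
qed

lemma integral_abs_rru_Z_limit_le:
  assumes Z: "Z \<in> borel_measurable M"
    and limit: "AE \<omega> in M. (\<lambda>k. rru_Z \<mu> \<nu> x y U V W k \<omega>) \<longlonglongrightarrow> Z \<omega>"
  shows "(\<integral>\<omega>. \<bar>rru_Z \<mu> \<nu> x y U V W n \<omega> - Z \<omega>\<bar> \<partial>M) \<le> l1_error_bound \<beta> m0 n0 n"
proof (cases "integrable M (\<lambda>\<omega>. \<bar>rru_Z \<mu> \<nu> x y U V W n \<omega> - Z \<omega>\<bar>)")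
  case True
  have "AE \<omega> in M. (\<lambda>k. urn_fraction (urn k \<omega>)) \<longlonglongrightarrow> Z \<omega>"
    using limit AE_rru_Z_eq by eventually_elim simp
  moreover have "(\<integral>\<omega>. \<bar>rru_Z \<mu> \<nu> x y U V W n \<omega> - Z \<omega>\<bar> \<partial>M) = (\<integral>\<omega>. \<bar>Z \<omega> - urn_fraction (urn n \<omega>)\<bar> \<partial>M)"
    using AE_rru_Z_eq Z borel_measurable_integrable[OF True]
    by (intro integral_cong_AE) (auto elim!: eventually_mono simp: abs_minus_commute)
  ultimately show ?thesis using integral_abs_limit_diff_le[OF Z] by simp
next
  text \<open>\<open>rru_Z\<close> uses the unclamped quantiles, so it need not be measurable; the integral of
    a non-integrable function is 0.\<close>
  case False
  have "0 \<le> l1_error_bound \<beta> m0 n0 n"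
    using inverse_square_tail_nonneg[OF m0_pos m0_le] \<beta>_pos by (simp add: l1_error_bound_def)
  then show ?thesis using False by (simp add: not_integrable_integral_eq)
qed

end

lemma rru_modelI:
  assumes "in_P \<beta> m0 \<mu> \<nu>" "driving_noise M U V W" "0 < m0" "m0 \<le> \<beta>" "0 \<le> x" "0 \<le> y" "1 \<le> n0"
    "1 / real n0 \<le> x + y"
  shows "rru_model M U V W \<mu> \<nu> \<beta> m0 x y n0"
  using assms
  by (intro rru_model.intro driving_noise_space.intro driving_noise_space_axioms.intro
      rru_model_axioms.intro) (simp_all add: driving_noise_def)

theorem lemma3p4:
  fixes \<beta> m0 :: real
  assumes "0 < m0" and "m0 \<le> \<beta>"
  shows "\<forall>n0::nat. n0 \<ge> 1 \<longrightarrow> (\<forall>\<epsilon>::real. \<epsilon> > 0 \<longrightarrow>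
    (\<exists>N::nat. \<forall>(M::'a measure) U V W (Zinf :: 'a \<Rightarrow> real) \<mu> \<nu> (x::real) (y::real) (n::nat).
       in_P \<beta> m0 \<mu> \<nu> \<longrightarrow>
       driving_noise M U V W \<longrightarrow>
       x \<ge> 0 \<longrightarrow> y \<ge> 0 \<longrightarrow> (x, y) \<noteq> (0, 0) \<longrightarrow> x + y \<ge> 1 / real n0 \<longrightarrow>
       Zinf \<in> borel_measurable M \<longrightarrow>
       (AE \<omega> in M. (\<lambda>k. rru_Z \<mu> \<nu> x y U V W k \<omega>) \<longlonglongrightarrow> Zinf \<omega>) \<longrightarrow>
       n \<ge> N \<longrightarrow>
       (\<integral>\<omega>. \<bar>rru_Z \<mu> \<nu> x y U V W n \<omega> - Zinf \<omega>\<bar> \<partial>M) \<le> \<epsilon>))"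
proof (intro allI impI)
  fix n0 :: nat and \<epsilon> :: real
  assume n0: "1 \<le> n0" and \<epsilon>: "0 < \<epsilon>"
  obtain N where N: "\<And>n. N \<le> n \<Longrightarrow> l1_error_bound \<beta> m0 n0 n < \<epsilon>"
    using order_tendstoD(2)[OF l1_error_bound_tendsto_0[OF assms] \<epsilon>]
    unfolding eventually_sequentially by blast
  note bound = rru_model.integral_abs_rru_Z_limit_le[OF rru_modelI[OF _ _ assms _ _ n0]]
  show "\<exists>N. \<forall>(M::'a measure) U V W Zinf \<mu> \<nu> x y n. in_P \<beta> m0 \<mu> \<nu> \<longrightarrow> driving_noise M U V W \<longrightarrow>
    x \<ge> 0 \<longrightarrow> y \<ge> 0 \<longrightarrow> (x, y) \<noteq> (0, 0) \<longrightarrow> x + y \<ge> 1 / real n0 \<longrightarrow> Zinf \<in> borel_measurable M \<longrightarrow>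
    (AE \<omega> in M. (\<lambda>k. rru_Z \<mu> \<nu> x y U V W k \<omega>) \<longlonglongrightarrow> Zinf \<omega>) \<longrightarrow> n \<ge> N \<longrightarrow>
    (\<integral>\<omega>. \<bar>rru_Z \<mu> \<nu> x y U V W n \<omega> - Zinf \<omega>\<bar> \<partial>M) \<le> \<epsilon>"
    by (intro exI[of _ N] allI impI, rule order_trans[OF bound less_imp_le[OF N]]) assumption+
qed

end
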